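(* Let $(\Omega,\mathcal{F},Q)$ be a probability space, let $\mathcal{K}\subset L_1(Q)$ be a closed convex cone, and let $\mathcal{K}^\oplus=\{y\in\overline{M}(\Omega,\mathcal{F}):\int xy\,dQ\ge 0\ \text{for all }x\in\mathcal{K}\}$. If $y_0$ solves the problem $\inf_{y\in\mathcal{K}^\oplus}\ln\int e^y\,dQ$, then $$\int y_0e^{y_0}\,dQ=0\quad\text{and}\quad \int y\,e^{y_0}\,dQ\ge 0\ \text{ for all } y\in\mathcal{K}^\oplus.$$
   Context: $\overline{M}(\Omega,\mathcal{F})$ denotes the set of extended-real-valued $\mathcal{F}$-measurable functions on $\Omega$. A cone is a set $K$ with $x\in K\Rightarrow \alpha x\in K$ for all $\alpha\ge 0$. *)

theory Defs
  imports "HOL-Probability.Probability"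
begin

definition eexp :: "ereal \<Rightarrow> ereal" where
  "eexp x = (case x of ereal r \<Rightarrow> ereal (exp r) | PInfty \<Rightarrow> \<infinity> | MInfty \<Rightarrow> 0)"

definition eln :: "ennreal \<Rightarrow> ereal" where
  "eln v = (if v = 0 then -\<infinity> else if v = \<infinity> then \<infinity> else ereal (ln (enn2real v)))"

definition eint_defined :: "'a measure \<Rightarrow> ('a \<Rightarrow> ereal) \<Rightarrow> bool" where
  "eint_defined M f \<longleftrightarrow> f \<in> borel_measurable M \<and>
     ((\<integral>\<^sup>+ w. e2ennreal (f w) \<partial>M) < \<infinity> \<or> (\<integral>\<^sup>+ w. e2ennreal (- f w) \<partial>M) < \<infinity>)"

definition eint :: "'a measure \<Rightarrow> ('a \<Rightarrow> ereal) \<Rightarrow> ereal" where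
  "eint M f = enn2ereal (\<integral>\<^sup>+ w. e2ennreal (f w) \<partial>M) - enn2ereal (\<integral>\<^sup>+ w. e2ennreal (- f w) \<partial>M)"

text \<open>L_1(Q) represented by integrable real functions; closedness w.r.t. the L_1 (semi)norm.\<close>
definition L1_closed :: "'a measure \<Rightarrow> ('a \<Rightarrow> real) set \<Rightarrow> bool" where
  "L1_closed M K \<longleftrightarrow> (\<forall>f g. (\<forall>n. f n \<in> K) \<and> integrable M g \<and>
      (\<forall>n. integrable M (f n)) \<and>
      (\<lambda>n. \<integral>w. \<bar>f n w - g w\<bar> \<partial>M) \<longlonglongrightarrow> 0 \<longrightarrow> g \<in> K)"

definition convex_cone_fun :: "('a \<Rightarrow> real) set \<Rightarrow> bool" where
  "convex_cone_fun K \<longleftrightarrow>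
     (\<forall>x\<in>K. \<forall>a::real. a \<ge> 0 \<longrightarrow> (\<lambda>w. a * x w) \<in> K) \<and>
     (\<forall>x\<in>K. \<forall>y\<in>K. \<forall>t::real. 0 \<le> t \<and> t \<le> 1 \<longrightarrow> (\<lambda>w. t * x w + (1 - t) * y w) \<in> K)"

definition dual_cone :: "'a measure \<Rightarrow> ('a \<Rightarrow> real) set \<Rightarrow> ('a \<Rightarrow> ereal) set" where
  "dual_cone M K = {y \<in> borel_measurable M. \<forall>x\<in>K.
      eint_defined M (\<lambda>w. ereal (x w) * y w) \<and> eint M (\<lambda>w. ereal (x w) * y w) \<ge> 0}"

definition objective :: "'a measure \<Rightarrow> ('a \<Rightarrow> ereal) \<Rightarrow> ereal" where
  "objective M y = eln (\<integral>\<^sup>+ w. e2ennreal (eexp (y w)) \<partial>M)"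

end

theory Submission
  imports Defs
begin

(* Write Z for the integral of exp y0. If Z = 0 then exp y0 = 0 almost everywhere and all
   integrals in question vanish. Otherwise Z is finite, because the zero function lies in the dual
   cone, and the key step is that the density z = exp y0 belongs to K itself. If it did not, the
   Hahn-Banach theorem in L1 together with the representation of the dual of L1 by bounded
   functions would give a g with |g| <= 1, integral g x <= 0 for x in K and integral g z > 0.
   Then y0 - s g stays in the dual cone, and exp u <= 1 + u + u^2 shows that its objective is
   smaller than that of y0 for small s > 0, contradicting optimality. Once z is in K, the integral
   of y exp y0 = y z is nonnegative for every y in the dual cone, in particular for y = y0.
   Conversely, comparing y0 with its multiples t y0, t < 1, and letting t tend to 1 (convexity of
   t |-> integral exp (t y0)) shows that the integral of y0 exp y0 is at most 0. *)

section \<open>Hahn--Banach for spaces of real functions\<close>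

locale sublinear_functional =
  fixes V :: "('a \<Rightarrow> real) set" and p :: "('a \<Rightarrow> real) \<Rightarrow> real"
  assumes add_closed: "\<And>x y. x \<in> V \<Longrightarrow> y \<in> V \<Longrightarrow> (\<lambda>v. x v + y v) \<in> V"
    and scale_closed: "\<And>x c. x \<in> V \<Longrightarrow> (\<lambda>v. c * x v) \<in> V"
    and subadditive: "\<And>x y. x \<in> V \<Longrightarrow> y \<in> V \<Longrightarrow> p (\<lambda>v. x v + y v) \<le> p x + p y"
    and positively_homogeneous: "\<And>x c. x \<in> V \<Longrightarrow> 0 \<le> c \<Longrightarrow> p (\<lambda>v. c * x v) = c * p x"
begin

lemma diff_closed: "x \<in> V \<Longrightarrow> y \<in> V \<Longrightarrow> (\<lambda>v. x v - y v) \<in> V"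
  using add_closed[OF _ scale_closed, of x y "- 1"] by simp

lemma p_zero: "x \<in> V \<Longrightarrow> p (\<lambda>v. 0) = 0"
  using positively_homogeneous[of x 0] by simp

lemma scale_le: assumes "x \<in> V" shows "c * p x \<le> p (\<lambda>v. c * x v)"
proof (cases "0 \<le> c")
  case True
  then show ?thesis using positively_homogeneous[OF assms] by simp
next
  case False
  have "p (\<lambda>v. 0) \<le> p (\<lambda>v. c * x v) + p (\<lambda>v. (- c) * x v)"
    using subadditive[OF scale_closed[OF assms] scale_closed[OF assms], of c "- c"] by simp
  moreover have "p (\<lambda>v. (- c) * x v) = (- c) * p x"
    using False positively_homogeneous[OF assms, of "- c"] by simp
  ultimately show ?thesis using p_zero[OF assms] by simp
qed

end

text \<open>Partial extensions in the Zorn argument, represented by their graphs.\<close>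

locale dominated_linear_graph = sublinear_functional +
  fixes z :: "'a \<Rightarrow> real" and G :: "(('a \<Rightarrow> real) \<times> real) set"
  assumes graph_subset: "G \<subseteq> V \<times> UNIV"
    and graph_single_valued: "single_valued G"
    and graph_add: "\<And>x a y b. (x, a) \<in> G \<Longrightarrow> (y, b) \<in> G \<Longrightarrow> ((\<lambda>v. x v + y v), a + b) \<in> G"
    and graph_scale: "\<And>x a c. (x, a) \<in> G \<Longrightarrow> ((\<lambda>v. c * x v), c * a) \<in> G"
    and graph_dominated: "\<And>x a. (x, a) \<in> G \<Longrightarrow> a \<le> p x"
    and graph_attains: "(z, p z) \<in> G"

lemma (in sublinear_functional) dominated_linear_graphI:
  assumes "G \<subseteq> V \<times> UNIV" and "single_valued G"
    and "\<And>x a y b. (x, a) \<in> G \<Longrightarrow> (y, b) \<in> G \<Longrightarrow> ((\<lambda>v. x v + y v), a + b) \<in> G"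
    and "\<And>x a c. (x, a) \<in> G \<Longrightarrow> ((\<lambda>v. c * x v), c * a) \<in> G"
    and "\<And>x a. (x, a) \<in> G \<Longrightarrow> a \<le> p x" and "(z, p z) \<in> G"
  shows "dominated_linear_graph V p z G"
  using assms
  by (intro dominated_linear_graph.intro[OF sublinear_functional_axioms] dominated_linear_graph_axioms.intro)

context dominated_linear_graph
begin

lemma graph_mem_V: "(x, a) \<in> G \<Longrightarrow> x \<in> V"
  using graph_subset by blast

lemma graph_unique: "(x, a) \<in> G \<Longrightarrow> (x, b) \<in> G \<Longrightarrow> a = b"
  using graph_single_valued by (auto simp: single_valued_def)

lemma graph_zero: "((\<lambda>v. 0), 0) \<in> G"
  using graph_scale[OF graph_attains, of 0] by simp

lemma extension_value:
  assumes "w \<in> V"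
  obtains c where "\<And>x a. (x, a) \<in> G \<Longrightarrow> a - p (\<lambda>v. x v - w v) \<le> c"
    and "\<And>x a. (x, a) \<in> G \<Longrightarrow> c \<le> p (\<lambda>v. x v + w v) - a"
proof -
  have key: "a - p (\<lambda>v. x v - w v) \<le> p (\<lambda>v. y v + w v) - b" if "(x, a) \<in> G" "(y, b) \<in> G" for x a y b
  proof -
    have "(\<lambda>v. x v - w v) \<in> V" "(\<lambda>v. y v + w v) \<in> V"
      using graph_mem_V that assms by (blast intro: diff_closed add_closed)+
    moreover have "a + b \<le> p (\<lambda>v. (x v - w v) + (y v + w v))"
      using graph_dominated[OF graph_add[OF that]] by simp
    ultimately show ?thesis using subadditive by fastforce
  qed
  define S where "S = {a - p (\<lambda>v. x v - w v) | x a. (x, a) \<in> G}"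
  have "S \<noteq> {}" and "bdd_above S"
    using graph_zero key unfolding S_def bdd_above_def by blast+
  then show ?thesis
    by (intro that[of "Sup S"]) (auto intro!: cSup_upper cSup_least simp: S_def key)
qed

lemma extension_coordinates_unique:
  assumes w: "w \<notin> Domain G" and G: "(x1, a1) \<in> G" "(x2, a2) \<in> G"
    and eq: "(\<lambda>v. x1 v + t1 * w v) = (\<lambda>v. x2 v + t2 * w v)"
  shows "t1 = t2 \<and> x1 = x2"
proof (cases "t1 = t2")
  case False
  have "((\<lambda>v. (1 / (t2 - t1)) * (x1 v + (- 1) * x2 v)), (1 / (t2 - t1)) * (a1 + (- 1) * a2)) \<in> G"
    using graph_scale[OF graph_add[OF G(1) graph_scale[OF G(2)]]] .
  moreover have "(\<lambda>v. (1 / (t2 - t1)) * (x1 v + (- 1) * x2 v)) = w"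
    using False eq by (auto simp: fun_eq_iff field_simps dest!: fun_cong)
  ultimately show ?thesis using w by (metis Domain.intros)
qed (use eq in \<open>auto simp: fun_eq_iff\<close>)

lemma extension_dominated:
  assumes w: "w \<in> V"
    and c_lower: "\<And>x a. (x, a) \<in> G \<Longrightarrow> a - p (\<lambda>v. x v - w v) \<le> c"
    and c_upper: "\<And>x a. (x, a) \<in> G \<Longrightarrow> c \<le> p (\<lambda>v. x v + w v) - a"
    and x: "(x, a) \<in> G"
  shows "a + t * c \<le> p (\<lambda>v. x v + t * w v)"
proof -
  have xV: "x \<in> V" using graph_mem_V[OF x] .
  consider "t = 0" | "t > 0" | "t < 0" by linarith
  then show ?thesis
  proof cases
    case 1
    then show ?thesis using graph_dominated[OF x] by simp
  next
    case 2
    have "t * c \<le> t * p (\<lambda>v. (1 / t) * x v + w v) - a"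
      using c_upper[OF graph_scale[OF x, of "1 / t"]] 2 by (simp add: field_simps)
    also have "t * p (\<lambda>v. (1 / t) * x v + w v) = p (\<lambda>v. t * ((1 / t) * x v + w v))"
      using 2 xV w by (intro positively_homogeneous[symmetric] add_closed scale_closed) auto
    also have "(\<lambda>v. t * ((1 / t) * x v + w v)) = (\<lambda>v. x v + t * w v)"
      using 2 by (simp add: fun_eq_iff ring_distribs)
    finally show ?thesis by simp
  next
    case 3
    have "a - (- t) * p (\<lambda>v. (1 / (- t)) * x v - w v) \<le> (- t) * c"
      using c_lower[OF graph_scale[OF x, of "1 / (- t)"]] 3 by (simp add: field_simps)
    also have "(- t) * p (\<lambda>v. (1 / (- t)) * x v - w v) = p (\<lambda>v. (- t) * ((1 / (- t)) * x v - w v))"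
      using 3 xV w by (intro positively_homogeneous[symmetric] diff_closed scale_closed) auto
    also have "(\<lambda>v. (- t) * ((1 / (- t)) * x v - w v)) = (\<lambda>v. x v + t * w v)"
      using 3 by (simp add: fun_eq_iff ring_distribs)
    finally show ?thesis by simp
  qed
qed

lemma extend:
  assumes w: "w \<in> V" "w \<notin> Domain G"
  obtains G' where "dominated_linear_graph V p z G'" and "G \<subset> G'"
proof -
  obtain c where c_lower: "\<And>x a. (x, a) \<in> G \<Longrightarrow> a - p (\<lambda>v. x v - w v) \<le> c"
    and c_upper: "\<And>x a. (x, a) \<in> G \<Longrightarrow> c \<le> p (\<lambda>v. x v + w v) - a"
    using extension_value[OF w(1)] by blast
  define G' where "G' = {((\<lambda>v. x v + t * w v), a + t * c) | x a t. (x, a) \<in> G}"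
  have G'_memI: "((\<lambda>v. x v + t * w v), a + t * c) \<in> G'" if "(x, a) \<in> G" for x a t
    using that unfolding G'_def by blast
  have "dominated_linear_graph V p z G'"
  proof (rule dominated_linear_graphI)
    show "G' \<subseteq> V \<times> UNIV"
      using graph_mem_V w(1) by (auto simp: G'_def intro!: add_closed scale_closed)
    show "single_valued G'"
    proof (rule single_valuedI)
      fix x a b assume "(x, a) \<in> G'" "(x, b) \<in> G'"
      then obtain x1 a1 t1 x2 a2 t2 where G: "(x1, a1) \<in> G" "(x2, a2) \<in> G"
        and eq: "(\<lambda>v. x1 v + t1 * w v) = (\<lambda>v. x2 v + t2 * w v)" "a = a1 + t1 * c" "b = a2 + t2 * c"
        unfolding G'_def by auto
      with extension_coordinates_unique[OF w(2) G eq(1)] show "a = b" using graph_unique by auto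
    qed
    show "((\<lambda>v. x v + y v), a + b) \<in> G'" if "(x, a) \<in> G'" "(y, b) \<in> G'" for x a y b
    proof -
      from that obtain x1 a1 t1 x2 a2 t2 where G: "(x1, a1) \<in> G" "(x2, a2) \<in> G"
        and "x = (\<lambda>v. x1 v + t1 * w v)" "a = a1 + t1 * c" "y = (\<lambda>v. x2 v + t2 * w v)" "b = a2 + t2 * c"
        unfolding G'_def by blast
      moreover have "((\<lambda>v. (x1 v + x2 v) + (t1 + t2) * w v), (a1 + a2) + (t1 + t2) * c) \<in> G'"
        using G'_memI[OF graph_add[OF G]] .
      ultimately show ?thesis by (simp add: algebra_simps)
    qed
    show "((\<lambda>v. e * x v), e * a) \<in> G'" if "(x, a) \<in> G'" for x a e
    proof -
      from that obtain x1 a1 t where G: "(x1, a1) \<in> G" and "x = (\<lambda>v. x1 v + t * w v)" "a = a1 + t * c"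
        unfolding G'_def by blast
      moreover have "((\<lambda>v. e * x1 v + (e * t) * w v), e * a1 + (e * t) * c) \<in> G'"
        using G'_memI[OF graph_scale[OF G]] .
      ultimately show ?thesis by (simp add: algebra_simps)
    qed
    show "a \<le> p x" if "(x, a) \<in> G'" for x a
      using that extension_dominated[OF w(1) c_lower c_upper] unfolding G'_def by blast
    show "(z, p z) \<in> G'"
      using G'_memI[OF graph_attains, of 0] by simp
  qed
  moreover have "G \<subseteq> G'"
    using G'_memI[where t = 0] by auto
  moreover have "(w, c) \<in> G'"
    using G'_memI[OF graph_zero, of 1] by simp
  ultimately show ?thesis using w(2) that by blast
qed

end

context sublinear_functional
begin

lemma dominated_linear_graph_line:
  assumes "z \<in> V"
  shows "dominated_linear_graph V p z {((\<lambda>v. c * z v), c * p z) | c. True}"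
    (is "dominated_linear_graph V p z ?L")
proof (rule dominated_linear_graphI)
  show "single_valued ?L"
  proof (rule single_valuedI, clarify)
    fix c d assume eq: "(\<lambda>v. c * z v) = (\<lambda>v. d * z v)"
    show "c * p z = d * p z"
    proof (cases "c = d")
      case False
      with eq have "z = (\<lambda>v. 0 * z v)" by (auto simp: fun_eq_iff dest: fun_cong)
      then have "p z = 0" using positively_homogeneous[OF assms, of 0] by simp
      then show ?thesis by simp
    qed simp
  qed
  show "((\<lambda>v. x v + y v), a + b) \<in> ?L" if "(x, a) \<in> ?L" "(y, b) \<in> ?L" for x a y b
  proof -
    from that obtain c d where "x = (\<lambda>v. c * z v)" "a = c * p z" "y = (\<lambda>v. d * z v)" "b = d * p z"
      by blast
    then show ?thesis by (intro CollectI exI[of _ "c + d"]) (simp add: algebra_simps)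
  qed
  show "((\<lambda>v. e * x v), e * a) \<in> ?L" if "(x, a) \<in> ?L" for x a e
  proof -
    from that obtain c where "x = (\<lambda>v. c * z v)" "a = c * p z" by blast
    then show ?thesis by (intro CollectI exI[of _ "e * c"]) (simp add: algebra_simps)
  qed
  show "(z, p z) \<in> ?L" by (intro CollectI exI[of _ 1]) simp
qed (use assms scale_closed scale_le in auto)

lemma dominated_linear_graph_Union_chain:
  assumes "C \<in> chains {G. dominated_linear_graph V p z G}" "C \<noteq> {}"
  shows "dominated_linear_graph V p z (\<Union>C)"
proof -
  have graph: "\<And>G. G \<in> C \<Longrightarrow> dominated_linear_graph V p z G"
    and chain: "\<And>G H. G \<in> C \<Longrightarrow> H \<in> C \<Longrightarrow> G \<subseteq> H \<or> H \<subseteq> G"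
    using assms(1) unfolding chains_def chain_subset_def by auto
  have common: "\<exists>G\<in>C. q \<in> G \<and> q' \<in> G" if "q \<in> \<Union>C" "q' \<in> \<Union>C" for q q'
    using that chain by blast
  show ?thesis
  proof (rule dominated_linear_graphI)
    show "\<Union>C \<subseteq> V \<times> UNIV" using dominated_linear_graph.graph_subset[OF graph] by blast
    show "single_valued (\<Union>C)"
      using common dominated_linear_graph.graph_unique[OF graph] by (blast intro: single_valuedI)
    show "((\<lambda>v. x v + y v), a + b) \<in> \<Union>C" if "(x, a) \<in> \<Union>C" "(y, b) \<in> \<Union>C" for x a y b
      using common[OF that] dominated_linear_graph.graph_add[OF graph] by blast
    show "((\<lambda>v. c * x v), c * a) \<in> \<Union>C" if "(x, a) \<in> \<Union>C" for x a c
      using that dominated_linear_graph.graph_scale[OF graph] by blast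
    show "a \<le> p x" if "(x, a) \<in> \<Union>C" for x a
      using that dominated_linear_graph.graph_dominated[OF graph] by blast
    show "(z, p z) \<in> \<Union>C"
      using assms(2) dominated_linear_graph.graph_attains[OF graph] by blast
  qed
qed

theorem hahn_banach:
  assumes "z \<in> V"
  obtains \<phi> where "\<And>x y. x \<in> V \<Longrightarrow> y \<in> V \<Longrightarrow> \<phi> (\<lambda>v. x v + y v) = \<phi> x + \<phi> y"
    and "\<And>x c. x \<in> V \<Longrightarrow> \<phi> (\<lambda>v. c * x v) = c * \<phi> x"
    and "\<And>x. x \<in> V \<Longrightarrow> \<phi> x \<le> p x" and "\<phi> z = p z"
proof -
  have "\<exists>G\<in>{G. dominated_linear_graph V p z G}. \<forall>H\<in>{G. dominated_linear_graph V p z G}. G \<subseteq> H \<longrightarrow> H = G"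
  proof (rule Zorn_Lemma2, intro ballI)
    fix C assume C: "C \<in> chains {G. dominated_linear_graph V p z G}"
    show "\<exists>U\<in>{G. dominated_linear_graph V p z G}. \<forall>G\<in>C. G \<subseteq> U"
    proof (cases "C = {}")
      case True
      then show ?thesis using dominated_linear_graph_line[OF assms] by blast
    next
      case False
      then show ?thesis using dominated_linear_graph_Union_chain[OF C] by blast
    qed
  qed
  then obtain G where "dominated_linear_graph V p z G"
    and maximal: "\<And>H. dominated_linear_graph V p z H \<Longrightarrow> G \<subseteq> H \<Longrightarrow> H = G"
    by blast
  then interpret dominated_linear_graph V p z G by simp
  have total: "x \<in> Domain G" if "x \<in> V" for x
    using extend[OF that] maximal by (metis psubset_eq)
  define \<phi> where "\<phi> x = (THE a. (x, a) \<in> G)" for x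
  have \<phi>_eq: "\<phi> x = a" if "(x, a) \<in> G" for x a
    unfolding \<phi>_def using that graph_unique by blast
  have graph: "(x, \<phi> x) \<in> G" if "x \<in> V" for x
    using total[OF that] \<phi>_eq by blast
  show ?thesis
    by (rule that[of \<phi>]) (simp_all add: \<phi>_eq graph graph_add graph_scale graph_dominated graph_attains)
qed

end

section \<open>The dual of \<open>L\<^sub>1\<close>\<close>

lemma dominated_additive_set_function_countably_additive:
  fixes \<nu> :: "'a set \<Rightarrow> real"
  assumes "finite_measure M"
    and additive: "\<And>A B. A \<in> sets M \<Longrightarrow> B \<in> sets M \<Longrightarrow> A \<inter> B = {} \<Longrightarrow> \<nu> (A \<union> B) = \<nu> A + \<nu> B"
    and nonneg: "\<And>A. A \<in> sets M \<Longrightarrow> 0 \<le> \<nu> A"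
    and dominated: "\<And>A. A \<in> sets M \<Longrightarrow> \<nu> A \<le> C * measure M A"
  shows "countably_additive (sets M) (\<lambda>A. ennreal (\<nu> A))"
proof -
  interpret finite_measure M by fact
  have "\<nu> {} = 0" using additive[of "{}" "{}"] by simp
  then have pos: "positive (sets M) (\<lambda>A. ennreal (\<nu> A))" by (simp add: positive_def)
  have add: "additive (sets M) (\<lambda>A. ennreal (\<nu> A))"
    unfolding additive_def using additive nonneg by simp
  show ?thesis
    unfolding sets.countably_additive_iff_continuous_from_below[OF pos add]
  proof (intro allI impI)
    fix A :: "nat \<Rightarrow> 'a set" assume A: "range A \<subseteq> sets M" "incseq A" "(\<Union>i. A i) \<in> sets M"
    define U where "U = (\<Union>i. A i)"
    have A_sets: "A i \<in> sets M" and diff_sets: "U - A i \<in> sets M" for i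
      using A by (auto simp: U_def)
    have split: "\<nu> U = \<nu> (A i) + \<nu> (U - A i)" for i
    proof -
      have "A i \<union> (U - A i) = U" by (auto simp: U_def)
      then show ?thesis using additive[OF A_sets[of i] diff_sets[of i]] by auto
    qed
    have "(\<lambda>i. \<nu> (A i)) \<longlonglongrightarrow> \<nu> U"
    proof (rule tendsto_sandwich[where f="\<lambda>i. \<nu> U - C * (measure M U - measure M (A i))"])
      show "\<forall>\<^sub>F i in sequentially. \<nu> U - C * (measure M U - measure M (A i)) \<le> \<nu> (A i)"
      proof (intro always_eventually allI)
        fix i
        have "measure M (U - A i) = measure M U - measure M (A i)"
          using A_sets by (intro finite_measure_Diff) (auto simp: U_def)
        then have "\<nu> (U - A i) \<le> C * (measure M U - measure M (A i))"
          using dominated[OF diff_sets[of i]] by simp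
        then show "\<nu> U - C * (measure M U - measure M (A i)) \<le> \<nu> (A i)"
          using split[of i] by simp
      qed
      show "\<forall>\<^sub>F i in sequentially. \<nu> (A i) \<le> \<nu> U"
        using split nonneg[OF diff_sets] by (intro always_eventually allI) (metis le_add_same_cancel1)
      have "(\<lambda>i. measure M (A i)) \<longlonglongrightarrow> measure M U"
        unfolding U_def by (rule finite_Lim_measure_incseq[OF A(1,2)])
      then show "(\<lambda>i. \<nu> U - C * (measure M U - measure M (A i))) \<longlonglongrightarrow> \<nu> U"
        by (auto intro!: tendsto_eq_intros)
    qed simp
    then show "(\<lambda>i. ennreal (\<nu> (A i))) \<longlonglongrightarrow> ennreal (\<nu> (\<Union>i. A i))"
      unfolding U_def[symmetric] by (rule tendsto_ennrealI)
  qed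
qed

lemma AE_le_if_nn_integral_indicator_le:
  fixes f :: "'a \<Rightarrow> ennreal"
  assumes "finite_measure M" and [measurable]: "f \<in> borel_measurable M" and "0 \<le> C"
    and bound: "\<And>A. A \<in> sets M \<Longrightarrow> (\<integral>\<^sup>+ w. f w * indicator A w \<partial>M) \<le> ennreal (C * measure M A)"
  shows "AE w in M. f w \<le> ennreal C"
proof (rule AE_upper_bound_inf_ennreal)
  interpret finite_measure M by fact
  fix e :: real assume "0 < e"
  define B where "B = {w \<in> space M. ennreal (C + e) \<le> f w}"
  have [measurable]: "B \<in> sets M" unfolding B_def by measurable
  define m where "m = measure M B"
  have "ennreal ((C + e) * m) = (\<integral>\<^sup>+ w. ennreal (C + e) * indicator B w \<partial>M)"
    using \<open>0 \<le> C\<close> \<open>0 < e\<close> by (simp add: nn_integral_cmult_indicator emeasure_eq_measure m_def ennreal_mult)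
  also have "\<dots> \<le> (\<integral>\<^sup>+ w. f w * indicator B w \<partial>M)"
    by (rule nn_integral_mono) (auto simp: B_def indicator_def)
  also have "\<dots> \<le> ennreal (C * m)"
    unfolding m_def by (rule bound) simp
  finally have "(C + e) * m \<le> C * m"
    using \<open>0 \<le> C\<close> by (subst (asm) ennreal_le_iff) (auto simp: m_def)
  then have "m = 0"
    using \<open>0 < e\<close> measure_nonneg[of M B]
    by (simp add: m_def distrib_right mult_le_0_iff del: measure_nonneg)
  then have "B \<in> null_sets M"
    by (auto simp: m_def emeasure_eq_measure intro: null_setsI)
  then show "AE w in M. f w \<le> ennreal C + ennreal e"
    by (rule AE_I') (use \<open>0 \<le> C\<close> \<open>0 < e\<close> in \<open>auto simp: B_def not_le intro: less_imp_le\<close>)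
qed

lemma dominated_additive_set_function_nn_density:
  fixes \<nu> :: "'a set \<Rightarrow> real"
  assumes "finite_measure M"
    and additive: "\<And>A B. A \<in> sets M \<Longrightarrow> B \<in> sets M \<Longrightarrow> A \<inter> B = {} \<Longrightarrow> \<nu> (A \<union> B) = \<nu> A + \<nu> B"
    and nonneg: "\<And>A. A \<in> sets M \<Longrightarrow> 0 \<le> \<nu> A"
    and dominated: "\<And>A. A \<in> sets M \<Longrightarrow> \<nu> A \<le> C * measure M A"
  obtains f where "f \<in> borel_measurable M"
    and "\<And>A. A \<in> sets M \<Longrightarrow> (\<integral>\<^sup>+ w. f w * indicator A w \<partial>M) = ennreal (\<nu> A)"
proof -
  interpret finite_measure M by fact
  define N where "N = measure_of (space M) (sets M) (\<lambda>A. ennreal (\<nu> A))"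
  have "\<nu> {} = 0" using additive[of "{}" "{}"] by simp
  then have "positive (sets M) (\<lambda>A. ennreal (\<nu> A))" by (simp add: positive_def)
  moreover have "countably_additive (sets M) (\<lambda>A. ennreal (\<nu> A))"
    using assms(1) additive nonneg dominated by (rule dominated_additive_set_function_countably_additive)
  ultimately have emeasure_N: "emeasure N A = ennreal (\<nu> A)" if "A \<in> sets M" for A
    unfolding N_def by (rule emeasure_measure_of_sigma[OF sets.sigma_algebra_axioms _ _ that])
  have sets_N: "sets N = sets M" unfolding N_def by simp
  have "absolutely_continuous M N"
    unfolding absolutely_continuous_def
  proof
    fix A assume "A \<in> null_sets M"
    then have "A \<in> sets M" and "measure M A = 0"
      by (auto simp: measure_def)
    then show "A \<in> null_sets N"
      using nonneg[of A] dominated[of A] emeasure_N sets_N by (auto intro: null_setsI)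
  qed
  then obtain f where f: "f \<in> borel_measurable M" and "density M f = N"
    using Radon_Nikodym sets_N by metis
  then show ?thesis
    using emeasure_density[OF f] emeasure_N by (intro that[OF f]) simp
qed

lemma dominated_additive_set_function_density:
  fixes \<nu> :: "'a set \<Rightarrow> real"
  assumes "finite_measure M" and "0 \<le> C"
    and additive: "\<And>A B. A \<in> sets M \<Longrightarrow> B \<in> sets M \<Longrightarrow> A \<inter> B = {} \<Longrightarrow> \<nu> (A \<union> B) = \<nu> A + \<nu> B"
    and nonneg: "\<And>A. A \<in> sets M \<Longrightarrow> 0 \<le> \<nu> A"
    and dominated: "\<And>A. A \<in> sets M \<Longrightarrow> \<nu> A \<le> C * measure M A"
  obtains h where "h \<in> borel_measurable M" and "\<And>w. 0 \<le> h w \<and> h w \<le> C"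
    and "\<And>A. A \<in> sets M \<Longrightarrow> \<nu> A = (\<integral>w. h w * indicator A w \<partial>M)"
proof -
  interpret finite_measure M by fact
  obtain f where f[measurable]: "f \<in> borel_measurable M"
    and f_int: "\<And>A. A \<in> sets M \<Longrightarrow> (\<integral>\<^sup>+ w. f w * indicator A w \<partial>M) = ennreal (\<nu> A)"
    using dominated_additive_set_function_nn_density[OF assms(1) additive nonneg dominated] by metis
  have f_le: "AE w in M. f w \<le> ennreal C"
    using assms(1) f \<open>0 \<le> C\<close>
    by (rule AE_le_if_nn_integral_indicator_le) (simp add: f_int ennreal_leI dominated)
  define h where "h w = enn2real (min (f w) C)" for w
  have h_meas[measurable]: "h \<in> borel_measurable M" unfolding h_def by measurable
  have h_bounds: "0 \<le> h w \<and> h w \<le> C" for w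
    using \<open>0 \<le> C\<close> by (auto simp: h_def enn2real_leI min_le_iff_disj)
  have f_eq: "AE w in M. f w = ennreal (h w)"
    using f_le by eventually_elim
      (auto simp: h_def min_absorb1
        intro!: ennreal_enn2real[symmetric] le_less_trans[OF _ ennreal_less_top])
  have "integrable M h"
    using h_bounds by (intro integrable_const_bound[where B=C]) auto
  have "\<nu> A = (\<integral>w. h w * indicator A w \<partial>M)" if "A \<in> sets M" for A
  proof -
    have "ennreal (\<nu> A) = (\<integral>\<^sup>+ w. f w * indicator A w \<partial>M)"
      using f_int[OF that] by simp
    also have "\<dots> = (\<integral>\<^sup>+ w. ennreal (h w * indicator A w) \<partial>M)"
      using f_eq by (intro nn_integral_cong_AE) (auto elim!: eventually_mono simp: indicator_def)
    also have "\<dots> = ennreal (\<integral>w. h w * indicator A w \<partial>M)"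
      using h_bounds integrable_real_mult_indicator[OF that \<open>integrable M h\<close>]
      by (intro nn_integral_eq_integral) auto
    finally show ?thesis
      using nonneg[OF that] h_bounds by (simp add: ennreal_inj integral_nonneg)
  qed
  with h_bounds show ?thesis
    using h_meas by (intro that[of h])
qed

lemma integrable_bounded_mult:
  fixes g x :: "'a \<Rightarrow> real"
  assumes "g \<in> borel_measurable M" "\<And>w. \<bar>g w\<bar> \<le> B" "integrable M x"
  shows "integrable M (\<lambda>w. g w * x w)"
proof (rule Bochner_Integration.integrable_bound[where f="\<lambda>w. B * x w"])
  show "AE w in M. norm (g w * x w) \<le> norm (B * x w)"
  proof (intro AE_I2)
    fix w
    have "\<bar>g w\<bar> * \<bar>x w\<bar> \<le> \<bar>B\<bar> * \<bar>x w\<bar>"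
      using assms(2)[of w] by (intro mult_right_mono) auto
    then show "norm (g w * x w) \<le> norm (B * x w)" by (simp add: abs_mult)
  qed
qed (use assms in \<open>auto intro: borel_measurable_integrable\<close>)

lemma integral_abs_diff_tendsto_0:
  fixes x :: "'a \<Rightarrow> real"
  assumes "\<And>i. integrable M (s i)" and "\<And>w. w \<in> space M \<Longrightarrow> (\<lambda>i. s i w) \<longlonglongrightarrow> x w"
    and "\<And>i w. w \<in> space M \<Longrightarrow> \<bar>s i w\<bar> \<le> 2 * \<bar>x w\<bar>" and "integrable M x"
  shows "(\<lambda>i. \<integral>w. \<bar>x w - s i w\<bar> \<partial>M) \<longlonglongrightarrow> 0"
proof -
  have "(\<lambda>i. \<integral>w. \<bar>x w - s i w\<bar> \<partial>M) \<longlonglongrightarrow> (\<integral>w. 0 \<partial>M)"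
  proof (rule integral_dominated_convergence[where w="\<lambda>w. 3 * \<bar>x w\<bar>"])
    show "(\<lambda>w. \<bar>x w - s i w\<bar>) \<in> borel_measurable M" for i
      using assms(1,4) by auto
    show "integrable M (\<lambda>w. 3 * \<bar>x w\<bar>)"
      using assms(4) by auto
    show "AE w in M. (\<lambda>i. \<bar>x w - s i w\<bar>) \<longlonglongrightarrow> 0"
    proof (rule AE_I2)
      fix w assume "w \<in> space M"
      then have "(\<lambda>i. \<bar>x w - s i w\<bar>) \<longlonglongrightarrow> \<bar>x w - x w\<bar>"
        by (intro tendsto_intros assms(2))
      then show "(\<lambda>i. \<bar>x w - s i w\<bar>) \<longlonglongrightarrow> 0" by simp
    qed
    show "AE w in M. norm \<bar>x w - s i w\<bar> \<le> 3 * \<bar>x w\<bar>" for i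
    proof (rule AE_I2)
      fix w assume "w \<in> space M"
      then have "\<bar>s i w\<bar> \<le> 2 * \<bar>x w\<bar>" by (rule assms(3))
      then show "norm \<bar>x w - s i w\<bar> \<le> 3 * \<bar>x w\<bar>" by simp
    qed
  qed simp
  then show ?thesis by simp
qed

lemma L1_functional_eq_integral_if_indicator:
  fixes \<phi> :: "('a \<Rightarrow> real) \<Rightarrow> real"
  assumes additive: "\<And>x y. integrable M x \<Longrightarrow> integrable M y \<Longrightarrow> \<phi> (\<lambda>w. x w + y w) = \<phi> x + \<phi> y"
    and homogeneous: "\<And>x c. integrable M x \<Longrightarrow> \<phi> (\<lambda>w. c * x w) = c * \<phi> x"
    and bounded: "\<And>x. integrable M x \<Longrightarrow> \<bar>\<phi> x\<bar> \<le> (\<integral>w. \<bar>x w\<bar> \<partial>M)"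
    and g: "g \<in> borel_measurable M" "\<And>w. \<bar>g w\<bar> \<le> 1"
    and indicator: "\<And>A. A \<in> sets M \<Longrightarrow> \<phi> (indicator A) = (\<integral>w. g w * indicator A w \<partial>M)"
    and "integrable M x"
  shows "\<phi> x = (\<integral>w. g w * x w \<partial>M)"
  using \<open>integrable M x\<close>
proof (induction rule: integrable_induct)
  case (base A c)
  have "integrable M (indicator A :: 'a \<Rightarrow> real)"
    using base by (simp add: integrable_real_indicator)
  then show ?case
    using homogeneous[of "indicator A" c] indicator[OF base(1)]
    by (simp add: mult.commute mult.left_commute)
next
  case (add x y)
  then show ?case
    using additive[of x y] integrable_bounded_mult[OF g] by (simp add: distrib_left)
next
  case (lim x s)
  define \<psi> where "\<psi> y = \<phi> y - (\<integral>w. g w * y w \<partial>M)" for y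
  have diff_int: "integrable M (\<lambda>w. x w - s i w)" for i
    using lim.hyps by auto
  have \<psi>_bound: "\<bar>\<psi> y\<bar> \<le> 2 * (\<integral>w. \<bar>y w\<bar> \<partial>M)" if "integrable M y" for y
  proof -
    have "\<bar>\<integral>w. g w * y w \<partial>M\<bar> \<le> (\<integral>w. \<bar>g w * y w\<bar> \<partial>M)"
      by (rule integral_abs_bound)
    also have "\<dots> \<le> (\<integral>w. \<bar>y w\<bar> \<partial>M)"
      using integrable_bounded_mult[OF g that] that g(2)
      by (intro integral_mono integrable_abs) (auto simp: abs_mult intro: mult_left_le_one_le)
    finally show ?thesis
      using bounded[OF that] unfolding \<psi>_def by linarith
  qed
  have \<psi>_split: "\<psi> x = \<psi> (s i) + \<psi> (\<lambda>w. x w - s i w)" for i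
    using additive[OF lim.hyps(1)[of i] diff_int[of i]]
      integrable_bounded_mult[OF g lim.hyps(1)] integrable_bounded_mult[OF g diff_int]
    unfolding \<psi>_def by (simp add: algebra_simps flip: Bochner_Integration.integral_add)
  have bound: "\<bar>\<psi> x\<bar> \<le> 2 * (\<integral>w. \<bar>x w - s i w\<bar> \<partial>M)" for i
    using \<psi>_split[of i] lim.IH[of i] \<psi>_bound[OF diff_int[of i]] by (simp add: \<psi>_def)
  have "(\<lambda>i. 2 * (\<integral>w. \<bar>x w - s i w\<bar> \<partial>M)) \<longlonglongrightarrow> 2 * 0"
    using lim.hyps by (intro tendsto_mult tendsto_const integral_abs_diff_tendsto_0) auto
  moreover have "\<forall>\<^sub>F i in sequentially. \<bar>\<psi> x\<bar> \<le> 2 * (\<integral>w. \<bar>x w - s i w\<bar> \<partial>M)"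
    using bound by simp
  ultimately have "\<bar>\<psi> x\<bar> \<le> 2 * 0"
    by (rule tendsto_le[OF trivial_limit_sequentially _ tendsto_const])
  then show ?case unfolding \<psi>_def by simp
qed

lemma L1_functional_indicator_representation:
  fixes \<phi> :: "('a \<Rightarrow> real) \<Rightarrow> real"
  assumes "finite_measure M"
    and additive: "\<And>x y. integrable M x \<Longrightarrow> integrable M y \<Longrightarrow> \<phi> (\<lambda>w. x w + y w) = \<phi> x + \<phi> y"
    and bounded: "\<And>x. integrable M x \<Longrightarrow> \<bar>\<phi> x\<bar> \<le> (\<integral>w. \<bar>x w\<bar> \<partial>M)"
  obtains g where "g \<in> borel_measurable M" and "\<And>w. \<bar>g w\<bar> \<le> 1"
    and "\<And>A. A \<in> sets M \<Longrightarrow> \<phi> (indicator A) = (\<integral>w. g w * indicator A w \<partial>M)"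
proof -
  interpret finite_measure M by fact
  have indicator_int: "integrable M (indicator A :: 'a \<Rightarrow> real)" if "A \<in> sets M" for A
    using that by (intro integrable_real_indicator) (simp_all add: less_top[symmetric])
  have indicator_bound: "\<bar>\<phi> (indicator A)\<bar> \<le> measure M A" if "A \<in> sets M" for A
    using bounded[OF indicator_int[OF that]] that by simp
  define \<nu> where "\<nu> A = \<phi> (indicator A) + measure M A" for A
  have \<nu>_additive: "\<nu> (A \<union> B) = \<nu> A + \<nu> B" if "A \<in> sets M" "B \<in> sets M" "A \<inter> B = {}" for A B
  proof -
    have "indicator (A \<union> B) = (\<lambda>w. indicator A w + indicator B w :: real)"
      using that(3) by (auto simp: indicator_def fun_eq_iff)
    then show ?thesis
      using additive[OF indicator_int[OF that(1)] indicator_int[OF that(2)]] finite_measure_Union[OF that]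
      by (simp add: \<nu>_def)
  qed
  have \<nu>_bounds: "0 \<le> \<nu> A" "\<nu> A \<le> 2 * measure M A" if "A \<in> sets M" for A
    using indicator_bound[OF that] by (simp_all add: \<nu>_def abs_le_iff)
  obtain h where h: "h \<in> borel_measurable M" "\<And>w. 0 \<le> h w \<and> h w \<le> 2"
    and h_density: "\<And>A. A \<in> sets M \<Longrightarrow> \<nu> A = (\<integral>w. h w * indicator A w \<partial>M)"
    by (rule dominated_additive_set_function_density[OF \<open>finite_measure M\<close> _ \<nu>_additive \<nu>_bounds]) simp_all
  define g where "g w = h w - 1" for w
  have g_meas: "g \<in> borel_measurable M"
    using h(1) unfolding g_def by measurable
  have g_bound: "\<bar>g w\<bar> \<le> 1" for w
    using h(2)[of w] by (simp add: g_def abs_le_iff)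
  have "\<phi> (indicator A) = (\<integral>w. g w * indicator A w \<partial>M)" if "A \<in> sets M" for A
  proof -
    have "(\<lambda>w. g w * indicator A w) = (\<lambda>w. h w * indicator A w - indicator A w)"
      by (simp add: g_def fun_eq_iff algebra_simps)
    moreover have "integrable M (\<lambda>w. h w * indicator A w)"
      using h(2) by (intro integrable_bounded_mult[OF h(1) _ indicator_int[OF that], of 2]) auto
    ultimately have "(\<integral>w. g w * indicator A w \<partial>M) = (\<integral>w. h w * indicator A w \<partial>M) - measure M A"
      using indicator_int[OF that] that by (simp add: Bochner_Integration.integral_diff)
    then show ?thesis using h_density[OF that] by (simp add: \<nu>_def)
  qed
  with g_meas g_bound show ?thesis by (rule that)
qed

lemma L1_functional_representation:
  fixes \<phi> :: "('a \<Rightarrow> real) \<Rightarrow> real"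
  assumes "finite_measure M"
    and additive: "\<And>x y. integrable M x \<Longrightarrow> integrable M y \<Longrightarrow> \<phi> (\<lambda>w. x w + y w) = \<phi> x + \<phi> y"
    and homogeneous: "\<And>x c. integrable M x \<Longrightarrow> \<phi> (\<lambda>w. c * x w) = c * \<phi> x"
    and bounded: "\<And>x. integrable M x \<Longrightarrow> \<bar>\<phi> x\<bar> \<le> (\<integral>w. \<bar>x w\<bar> \<partial>M)"
  obtains g where "g \<in> borel_measurable M" and "\<And>w. \<bar>g w\<bar> \<le> 1"
    and "\<And>x. integrable M x \<Longrightarrow> \<phi> x = (\<integral>w. g w * x w \<partial>M)"
proof -
  obtain g where g: "g \<in> borel_measurable M" "\<And>w. \<bar>g w\<bar> \<le> 1"
    and indicator: "\<And>A. A \<in> sets M \<Longrightarrow> \<phi> (indicator A) = (\<integral>w. g w * indicator A w \<partial>M)"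
    using L1_functional_indicator_representation[OF assms(1) additive bounded] by metis
  show ?thesis
  proof (rule that[OF g])
    show "\<phi> x = (\<integral>w. g w * x w \<partial>M)" if "integrable M x" for x
      using additive homogeneous bounded g indicator that
      by (rule L1_functional_eq_integral_if_indicator)
  qed
qed

section \<open>Separation from a closed convex cone in \<open>L\<^sub>1\<close>\<close>

lemma convex_cone_fun_scale: "convex_cone_fun K \<Longrightarrow> x \<in> K \<Longrightarrow> 0 \<le> a \<Longrightarrow> (\<lambda>w. a * x w) \<in> K"
  by (simp add: convex_cone_fun_def)

lemma convex_cone_fun_convex:
  "convex_cone_fun K \<Longrightarrow> x \<in> K \<Longrightarrow> y \<in> K \<Longrightarrow> 0 \<le> t \<Longrightarrow> t \<le> 1 \<Longrightarrow> (\<lambda>w. t * x w + (1 - t) * y w) \<in> K"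
  by (simp add: convex_cone_fun_def)

lemma convex_cone_fun_add:
  assumes "convex_cone_fun K" "x \<in> K" "y \<in> K"
  shows "(\<lambda>w. x w + y w) \<in> K"
proof -
  have "(\<lambda>w. (1/2) * x w + (1 - 1/2) * y w) \<in> K"
    using assms by (intro convex_cone_fun_convex) auto
  from convex_cone_fun_scale[OF assms(1) this, of 2] show ?thesis
    by (simp add: algebra_simps)
qed

lemma convex_cone_fun_zero: "convex_cone_fun K \<Longrightarrow> K \<noteq> {} \<Longrightarrow> (\<lambda>w. 0) \<in> K"
  using convex_cone_fun_scale[of K _ 0] by auto

definition L1_dist :: "'a measure \<Rightarrow> ('a \<Rightarrow> real) set \<Rightarrow> ('a \<Rightarrow> real) \<Rightarrow> real" where
  "L1_dist M K x = (INF k\<in>K. \<integral>w. \<bar>x w - k w\<bar> \<partial>M)"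

lemma L1_dist_le: "k \<in> K \<Longrightarrow> L1_dist M K x \<le> (\<integral>w. \<bar>x w - k w\<bar> \<partial>M)"
  unfolding L1_dist_def by (rule cINF_lower) (auto intro: bdd_belowI2[where m=0])

lemma L1_dist_greatest:
  "K \<noteq> {} \<Longrightarrow> (\<And>k. k \<in> K \<Longrightarrow> c \<le> (\<integral>w. \<bar>x w - k w\<bar> \<partial>M)) \<Longrightarrow> c \<le> L1_dist M K x"
  unfolding L1_dist_def by (rule cINF_greatest)

lemma L1_dist_add_le:
  assumes K: "K \<subseteq> {x. integrable M x}" "convex_cone_fun K" "K \<noteq> {}"
    and x: "integrable M x" and y: "integrable M y"
  shows "L1_dist M K (\<lambda>w. x w + y w) \<le> L1_dist M K x + L1_dist M K y"
proof -
  have "L1_dist M K (\<lambda>w. x w + y w) \<le> (\<integral>w. \<bar>x w - k w\<bar> \<partial>M) + (\<integral>w. \<bar>y w - l w\<bar> \<partial>M)"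
    if "k \<in> K" "l \<in> K" for k l
  proof -
    have k: "integrable M k" and l: "integrable M l" using K(1) that by auto
    have "L1_dist M K (\<lambda>w. x w + y w) \<le> (\<integral>w. \<bar>(x w + y w) - (k w + l w)\<bar> \<partial>M)"
      using L1_dist_le[OF convex_cone_fun_add[OF K(2) that]] by simp
    also have "\<dots> \<le> (\<integral>w. \<bar>x w - k w\<bar> + \<bar>y w - l w\<bar> \<partial>M)"
      using x y k l by (intro integral_mono) auto
    also have "\<dots> = (\<integral>w. \<bar>x w - k w\<bar> \<partial>M) + (\<integral>w. \<bar>y w - l w\<bar> \<partial>M)"
      using x y k l by (intro Bochner_Integration.integral_add) auto
    finally show ?thesis .
  qed
  then have "L1_dist M K (\<lambda>w. x w + y w) - (\<integral>w. \<bar>y w - l w\<bar> \<partial>M) \<le> L1_dist M K x" if "l \<in> K" for l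
    using that K(3) by (intro L1_dist_greatest) force+
  then have "L1_dist M K (\<lambda>w. x w + y w) - L1_dist M K x \<le> L1_dist M K y"
    using K(3) by (intro L1_dist_greatest) force+
  then show ?thesis by simp
qed

lemma L1_dist_scale:
  assumes K: "convex_cone_fun K" "K \<noteq> {}" and "0 \<le> c"
  shows "L1_dist M K (\<lambda>w. c * x w) = c * L1_dist M K x"
proof (cases "c = 0")
  case True
  then show ?thesis
    using L1_dist_le[OF convex_cone_fun_zero[OF K], of M "\<lambda>w. 0"] L1_dist_greatest[OF K(2), of 0 M "\<lambda>w. 0"]
    by auto
next
  case False
  with \<open>0 \<le> c\<close> have c: "0 < c" by simp
  have scaled: "(\<integral>w. \<bar>c * x w - c * k w\<bar> \<partial>M) = c * (\<integral>w. \<bar>x w - k w\<bar> \<partial>M)" for k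
    using c by (simp add: abs_mult flip: right_diff_distrib)
  have "L1_dist M K (\<lambda>w. c * x w) / c \<le> L1_dist M K x"
  proof (rule L1_dist_greatest[OF K(2)])
    fix k assume "k \<in> K"
    then have "L1_dist M K (\<lambda>w. c * x w) \<le> c * (\<integral>w. \<bar>x w - k w\<bar> \<partial>M)"
      using L1_dist_le[OF convex_cone_fun_scale[OF K(1) _ less_imp_le[OF c]]] scaled by metis
    then show "L1_dist M K (\<lambda>w. c * x w) / c \<le> (\<integral>w. \<bar>x w - k w\<bar> \<partial>M)"
      using c by (simp add: divide_le_eq mult.commute)
  qed
  moreover have "c * L1_dist M K x \<le> L1_dist M K (\<lambda>w. c * x w)"
  proof (rule L1_dist_greatest[OF K(2)])
    fix k assume "k \<in> K"
    then have "L1_dist M K x \<le> (\<integral>w. \<bar>x w - (1 / c) * k w\<bar> \<partial>M)"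
      using c by (intro L1_dist_le convex_cone_fun_scale[OF K(1)]) auto
    also have "\<dots> = (1 / c) * (\<integral>w. \<bar>c * x w - k w\<bar> \<partial>M)"
      using scaled[of "\<lambda>w. (1 / c) * k w"] c by simp
    finally show "c * L1_dist M K x \<le> (\<integral>w. \<bar>c * x w - k w\<bar> \<partial>M)"
      using c by (simp add: field_simps)
  qed
  ultimately show ?thesis
    using c by (simp add: divide_le_eq mult.commute)
qed

lemma sublinear_functional_L1_dist:
  assumes "K \<subseteq> {x. integrable M x}" "convex_cone_fun K" "K \<noteq> {}"
  shows "sublinear_functional {x. integrable M x} (L1_dist M K)"
  using assms by unfold_locales (simp_all add: L1_dist_add_le L1_dist_scale)

lemma L1_dist_pos:
  assumes K: "K \<subseteq> {x. integrable M x}" "L1_closed M K" "K \<noteq> {}"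
    and z: "integrable M z" "z \<notin> K"
  shows "0 < L1_dist M K z"
proof (rule ccontr)
  assume "\<not> 0 < L1_dist M K z"
  then have small: "L1_dist M K z < 1 / real (Suc n)" for n
    by (simp add: not_less order.strict_trans1)
  have "\<exists>k\<in>K. (\<integral>w. \<bar>z w - k w\<bar> \<partial>M) < 1 / real (Suc n)" for n
  proof (rule ccontr)
    assume "\<not> (\<exists>k\<in>K. (\<integral>w. \<bar>z w - k w\<bar> \<partial>M) < 1 / real (Suc n))"
    then have "1 / real (Suc n) \<le> L1_dist M K z"
      by (intro L1_dist_greatest[OF K(3)]) (auto simp: not_less)
    with small[of n] show False by simp
  qed
  then obtain k where k: "\<And>n. k n \<in> K" "\<And>n. (\<integral>w. \<bar>z w - k n w\<bar> \<partial>M) < 1 / real (Suc n)"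
    by metis
  have "(\<lambda>n. \<integral>w. \<bar>k n w - z w\<bar> \<partial>M) \<longlonglongrightarrow> 0"
  proof (rule tendsto_sandwich[OF _ _ tendsto_const LIMSEQ_Suc[OF lim_1_over_n]])
    show "\<forall>\<^sub>F n in sequentially. (\<integral>w. \<bar>k n w - z w\<bar> \<partial>M) \<le> 1 / real (Suc n)"
      using k(2) by (auto simp: abs_minus_commute less_imp_le)
  qed auto
  then have "z \<in> K"
    using K(1,2) k(1) z(1) unfolding L1_closed_def by blast
  with z(2) show False by simp
qed

lemma L1_closed_cone_separation:
  assumes "finite_measure M" and K: "K \<subseteq> {x. integrable M x}" "L1_closed M K" "convex_cone_fun K" "K \<noteq> {}"
    and z: "integrable M z" "z \<notin> K"
  obtains g where "g \<in> borel_measurable M" and "\<And>w. \<bar>g w\<bar> \<le> 1"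
    and "\<And>x. x \<in> K \<Longrightarrow> (\<integral>w. g w * x w \<partial>M) \<le> 0" and "0 < (\<integral>w. g w * z w \<partial>M)"
proof -
  interpret sublinear_functional "{x. integrable M x}" "L1_dist M K"
    using sublinear_functional_L1_dist[OF K(1,3,4)] .
  obtain \<phi> where additive: "\<And>x y. integrable M x \<Longrightarrow> integrable M y \<Longrightarrow> \<phi> (\<lambda>w. x w + y w) = \<phi> x + \<phi> y"
    and homogeneous: "\<And>x c. integrable M x \<Longrightarrow> \<phi> (\<lambda>w. c * x w) = c * \<phi> x"
    and dominated: "\<And>x. integrable M x \<Longrightarrow> \<phi> x \<le> L1_dist M K x"
    and at_z: "\<phi> z = L1_dist M K z"
    using hahn_banach[of z] z(1) by auto
  have L1_dist_le_norm: "L1_dist M K x \<le> (\<integral>w. \<bar>x w\<bar> \<partial>M)" for x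
    using L1_dist_le[OF convex_cone_fun_zero[OF K(3,4)]] by simp
  have bounded: "\<bar>\<phi> x\<bar> \<le> (\<integral>w. \<bar>x w\<bar> \<partial>M)" if "integrable M x" for x
    using dominated[OF that] dominated[of "\<lambda>w. (- 1) * x w"] homogeneous[OF that, of "- 1"]
      L1_dist_le_norm[of x] L1_dist_le_norm[of "\<lambda>w. (- 1) * x w"] that
    by (simp add: abs_le_iff)
  obtain g where g: "g \<in> borel_measurable M" "\<And>w. \<bar>g w\<bar> \<le> 1"
    and represents: "\<And>x. integrable M x \<Longrightarrow> \<phi> x = (\<integral>w. g w * x w \<partial>M)"
    using L1_functional_representation[OF assms(1) additive homogeneous bounded] by blast
  show ?thesis
  proof (rule that[OF g])
    show "(\<integral>w. g w * x w \<partial>M) \<le> 0" if "x \<in> K" for x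
      using dominated[of x] L1_dist_le[OF that, of M x] represents[of x] K(1) that by auto
    show "0 < (\<integral>w. g w * z w \<partial>M)"
      using at_z represents[OF z(1)] L1_dist_pos[OF K(1,2,4) z] by simp
  qed
qed

section \<open>Exponential estimates\<close>

lemma exp_le_1_plus_x_plus_square:
  fixes u :: real assumes "\<bar>u\<bar> \<le> 1" shows "exp u \<le> 1 + u + u\<^sup>2"
proof (cases "u \<ge> 0")
  case True then show ?thesis using exp_bound[of u] assms by simp
next
  case False
  have "exp u = inverse (exp (- u))" by (simp add: exp_minus)
  also have "\<dots> \<le> inverse (1 - u)"
    using False exp_ge_add_one_self[of "- u"] by (intro le_imp_inverse_le) auto
  also have "\<dots> \<le> 1 + u + u\<^sup>2"
  proof -
    have "(1 - u) * (1 + u + u\<^sup>2) = 1 - u * u\<^sup>2" by (simp add: algebra_simps power2_eq_square)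
    moreover have "u * u\<^sup>2 < 0" using False by (simp add: mult_neg_pos)
    ultimately show ?thesis using False by (simp add: field_simps)
  qed
  finally show ?thesis .
qed

lemma mult_exp_neg_mult_le_quadratic:
  fixes s g z :: real
  assumes s: "0 \<le> s" "s \<le> 1" and "\<bar>g\<bar> \<le> 1" "0 \<le> z"
  shows "z * exp (- (s * g)) \<le> (1 + s\<^sup>2) * z - s * (g * z)"
    and "0 \<le> (1 + s\<^sup>2) * z - s * (g * z)"
proof -
  have small: "\<bar>s * g\<bar> \<le> s"
    using assms by (simp add: abs_mult mult_left_le)
  then have "(s * g)\<^sup>2 \<le> s\<^sup>2"
    using power_mono[OF small, of 2] by simp
  moreover have "exp (- (s * g)) \<le> 1 - s * g + (s * g)\<^sup>2"
    using exp_le_1_plus_x_plus_square[of "- (s * g)"] small s(2) by simp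
  ultimately have "exp (- (s * g)) \<le> 1 + s\<^sup>2 - s * g"
    by simp
  then have "z * exp (- (s * g)) \<le> z * (1 + s\<^sup>2 - s * g)"
    using \<open>0 \<le> z\<close> by (rule mult_left_mono)
  then show "z * exp (- (s * g)) \<le> (1 + s\<^sup>2) * z - s * (g * z)"
    by (simp add: algebra_simps)
  have "s * g \<le> 1 + s\<^sup>2"
    using small s(2) zero_le_power2[of s] unfolding abs_le_iff by linarith
  then show "0 \<le> (1 + s\<^sup>2) * z - s * (g * z)"
    using mult_right_mono[OF _ \<open>0 \<le> z\<close>, of "s * g" "1 + s\<^sup>2"] by (simp add: algebra_simps)
qed

lemma exp_mult_tangent_le:
  fixes t u :: real shows "exp (t * u) * (1 + (1 - t) * u) \<le> exp u"
proof -
  have "exp (t * u) * (1 + (1 - t) * u) \<le> exp (t * u) * exp ((1 - t) * u)"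
    using exp_ge_add_one_self[of "(1 - t) * u"] by (intro mult_left_mono) auto
  also have "\<dots> = exp u" by (simp add: exp_add[symmetric] algebra_simps)
  finally show ?thesis .
qed

lemma exp_mult_le_1_plus_exp:
  fixes t u :: real assumes "0 \<le> t" "t \<le> 1" shows "exp (t * u) \<le> 1 + exp u"
proof (cases "u \<ge> 0")
  case True
  then have "exp (t * u) \<le> exp u" using assms by (simp add: mult_left_le_one_le)
  then show ?thesis by linarith
next
  case False
  then have "exp (t * u) \<le> 1" using assms by (simp add: mult_nonneg_nonpos)
  then show ?thesis using exp_ge_zero[of u] by linarith
qed

lemma mult_exp_neg_mult_le:
  fixes v t :: real assumes v: "0 \<le> v" and t: "1/2 \<le> t" "t \<le> 1"
  shows "v * exp (- (t * v)) \<le> v * exp (- v) + 8 * (1 - t)"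
proof -
  have "v * exp (- (t * v)) - v * exp (- v) = v * exp (- (t * v)) * (1 - exp (- ((1 - t) * v)))"
    by (simp add: algebra_simps exp_add[symmetric])
  also have "\<dots> \<le> v * exp (- (t * v)) * ((1 - t) * v)"
    using v exp_ge_add_one_self[of "- ((1 - t) * v)"] by (intro mult_left_mono) auto
  also have "\<dots> = (1 - t) * (v\<^sup>2 * exp (- (t * v)))"
    by (simp add: power2_eq_square algebra_simps)
  also have "\<dots> \<le> (1 - t) * (v\<^sup>2 * exp (- (v / 2)))"
    using v t mult_right_mono[of "1/2" t v] by (intro mult_left_mono) auto
  also have "\<dots> \<le> (1 - t) * 8"
  proof -
    have "1 + v / 2 + (v / 2)\<^sup>2 / 2 \<le> exp (v / 2)"
      using exp_lower_Taylor_quadratic[of "v / 2"] v by simp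
    then have "v\<^sup>2 \<le> 8 * exp (v / 2)" using v by (simp add: power2_eq_square field_simps)
    then have "v\<^sup>2 * exp (- (v / 2)) \<le> 8"
      by (simp add: exp_minus field_simps)
    then show ?thesis using t by (intro mult_left_mono) auto
  qed
  finally show ?thesis by simp
qed

lemma ennreal_exp_mult_tangent_le:
  fixes t u :: real assumes "t < 1"
  shows "ennreal (exp (t * u)) + ennreal (1 - t) * ennreal (u * exp (t * u))
    \<le> ennreal (exp u) + ennreal (1 - t) * ennreal (- (u * exp (t * u)))"
proof -
  have c: "0 < 1 - t" using assms by simp
  have tangent: "exp (t * u) + (1 - t) * (u * exp (t * u)) \<le> exp u"
    using exp_mult_tangent_le[of t u] by (simp add: algebra_simps)
  show ?thesis
  proof (cases "0 \<le> u")
    case True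
    then have "ennreal (exp (t * u)) + ennreal (1 - t) * ennreal (u * exp (t * u))
        = ennreal (exp (t * u) + (1 - t) * (u * exp (t * u)))"
      using c by (simp add: ennreal_plus ennreal_mult)
    also have "\<dots> \<le> ennreal (exp u)" using tangent by (rule ennreal_leI)
    finally show ?thesis by (simp add: add_increasing2)
  next
    case False
    define n where "n = - (u * exp (t * u))"
    have n: "0 \<le> n" using False by (simp add: n_def mult_nonpos_nonneg)
    have "ennreal (exp (t * u)) \<le> ennreal (exp u + (1 - t) * n)"
      using tangent by (intro ennreal_leI) (simp add: n_def)
    also have "\<dots> = ennreal (exp u) + ennreal (1 - t) * ennreal n"
      using c n by (simp add: ennreal_mult)
    finally show ?thesis using False by (simp add: n_def ennreal_neg mult_nonpos_nonneg)
  qed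
qed

lemma nn_integral_neg_mult_exp_mult_le:
  fixes u :: "'a \<Rightarrow> real"
  assumes [measurable]: "u \<in> borel_measurable M" and "1/2 \<le> t" "t \<le> 1"
  shows "(\<integral>\<^sup>+ w. ennreal (- (u w * exp (t * u w))) \<partial>M)
    \<le> (\<integral>\<^sup>+ w. ennreal (- (u w * exp (u w))) \<partial>M) + ennreal (8 * (1 - t)) * emeasure M (space M)"
proof -
  have "(\<integral>\<^sup>+ w. ennreal (- (u w * exp (t * u w))) \<partial>M)
      \<le> (\<integral>\<^sup>+ w. ennreal (- (u w * exp (u w))) + ennreal (8 * (1 - t)) \<partial>M)"
  proof (intro nn_integral_mono)
    fix w
    show "ennreal (- (u w * exp (t * u w))) \<le> ennreal (- (u w * exp (u w))) + ennreal (8 * (1 - t))"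
    proof (cases "u w < 0")
      case True
      have "- u w * exp (- (t * - u w)) \<le> - u w * exp (- (- u w)) + 8 * (1 - t)"
        using True assms by (intro mult_exp_neg_mult_le) auto
      then show ?thesis
        using True assms by (simp flip: ennreal_plus add: ennreal_leI mult_nonpos_nonneg)
    qed (simp add: ennreal_neg)
  qed
  also have "\<dots> = (\<integral>\<^sup>+ w. ennreal (- (u w * exp (u w))) \<partial>M) + ennreal (8 * (1 - t)) * emeasure M (space M)"
    by (simp add: nn_integral_add)
  finally show ?thesis .
qed

lemma nn_integral_mult_exp_pos_le_neg_scaled:
  fixes u :: "'a \<Rightarrow> real"
  assumes "finite_measure M" and [measurable]: "u \<in> borel_measurable M"
    and finite: "(\<integral>\<^sup>+ w. ennreal (exp (u w)) \<partial>M) < \<infinity>"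
    and optimal: "(\<integral>\<^sup>+ w. ennreal (exp (u w)) \<partial>M) \<le> (\<integral>\<^sup>+ w. ennreal (exp (t * u w)) \<partial>M)"
    and t: "0 \<le> t" "t < 1"
  shows "(\<integral>\<^sup>+ w. ennreal (u w * exp (t * u w)) \<partial>M) \<le> (\<integral>\<^sup>+ w. ennreal (- (u w * exp (t * u w))) \<partial>M)"
    (is "?P \<le> ?N")
proof -
  interpret finite_measure M by fact
  define c where "c = 1 - t"
  have c: "0 < c" using t by (simp add: c_def)
  let ?E = "\<lambda>s. \<integral>\<^sup>+ w. ennreal (exp (s * u w)) \<partial>M"
  have tangent: "ennreal (exp (t * u w)) + ennreal c * ennreal (u w * exp (t * u w))
      \<le> ennreal (exp (u w)) + ennreal c * ennreal (- (u w * exp (t * u w)))" for w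
    unfolding c_def using t(2) by (rule ennreal_exp_mult_tangent_le)
  have "?E t \<le> (\<integral>\<^sup>+ w. ennreal (1 + exp (u w)) \<partial>M)"
    using t exp_mult_le_1_plus_exp[of t] by (intro nn_integral_mono ennreal_leI) simp
  also have "\<dots> = emeasure M (space M) + (\<integral>\<^sup>+ w. ennreal (exp (u w)) \<partial>M)"
    by (simp add: nn_integral_add)
  also have "\<dots> < \<infinity>"
    using finite by (simp add: less_top[symmetric])
  finally have E_finite: "?E t < \<infinity>" .
  have "(\<integral>\<^sup>+ w. ennreal (exp (t * u w)) + ennreal c * ennreal (u w * exp (t * u w)) \<partial>M)
      \<le> (\<integral>\<^sup>+ w. ennreal (exp (u w)) + ennreal c * ennreal (- (u w * exp (t * u w))) \<partial>M)"
    by (intro nn_integral_mono tangent)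
  then have "?E t + ennreal c * ?P \<le> ?E 1 + ennreal c * ?N"
    by (simp add: nn_integral_add nn_integral_cmult)
  also have "\<dots> \<le> ?E t + ennreal c * ?N"
    using optimal by (intro add_right_mono) simp
  finally have "ennreal c * ?P \<le> ennreal c * ?N"
    using E_finite by (auto simp: ennreal_add_left_cancel_le)
  then show ?thesis
    using c by (simp add: ennreal_mult_le_mult_iff)
qed

lemma nn_integral_mult_exp_le_liminf:
  fixes u :: "'a \<Rightarrow> real"
  assumes "T \<longlonglongrightarrow> 1" and [measurable]: "u \<in> borel_measurable M"
  shows "(\<integral>\<^sup>+ w. ennreal (u w * exp (u w)) \<partial>M)
    \<le> liminf (\<lambda>n. \<integral>\<^sup>+ w. ennreal (u w * exp (T n * u w)) \<partial>M)"
proof -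
  have lim: "(\<lambda>n. ennreal (u w * exp (T n * u w))) \<longlonglongrightarrow> ennreal (u w * exp (1 * u w))" for w
    by (intro tendsto_ennrealI tendsto_intros assms(1))
  have "liminf (\<lambda>n. ennreal (u w * exp (T n * u w))) = ennreal (u w * exp (u w))" for w
    using lim_imp_Liminf[OF trivial_limit_sequentially lim[of w]] by simp
  then have "(\<integral>\<^sup>+ w. ennreal (u w * exp (u w)) \<partial>M)
      = (\<integral>\<^sup>+ w. liminf (\<lambda>n. ennreal (u w * exp (T n * u w))) \<partial>M)"
    by simp
  also have "\<dots> \<le> liminf (\<lambda>n. \<integral>\<^sup>+ w. ennreal (u w * exp (T n * u w)) \<partial>M)"
    by (rule nn_integral_liminf) simp
  finally show ?thesis .
qed

lemma nn_integral_mult_exp_pos_le_neg: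
  fixes u :: "'a \<Rightarrow> real"
  assumes "finite_measure M" and [measurable]: "u \<in> borel_measurable M"
    and finite: "(\<integral>\<^sup>+ w. ennreal (exp (u w)) \<partial>M) < \<infinity>"
    and optimal: "\<And>t. 0 < t \<Longrightarrow> t < 1 \<Longrightarrow>
      (\<integral>\<^sup>+ w. ennreal (exp (u w)) \<partial>M) \<le> (\<integral>\<^sup>+ w. ennreal (exp (t * u w)) \<partial>M)"
  shows "(\<integral>\<^sup>+ w. ennreal (u w * exp (u w)) \<partial>M) \<le> (\<integral>\<^sup>+ w. ennreal (- (u w * exp (u w))) \<partial>M)"
proof -
  interpret finite_measure M by fact
  define P N where "P t = (\<integral>\<^sup>+ w. ennreal (u w * exp (t * u w)) \<partial>M)"
    and "N t = (\<integral>\<^sup>+ w. ennreal (- (u w * exp (t * u w))) \<partial>M)" for t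
  define T where "T n = 1 - 1 / real (n + 2)" for n :: nat
  define C where "C = emeasure M (space M)"
  have T: "1/2 \<le> T n" "T n < 1" for n
    unfolding T_def by (auto simp: field_simps)
  have T_lim: "T \<longlonglongrightarrow> 1"
  proof -
    have "(\<lambda>n. 1 - 1 / real (n + 2)) \<longlonglongrightarrow> 1 - 0"
      by (intro tendsto_diff tendsto_const LIMSEQ_ignore_initial_segment[OF lim_1_over_n])
    then show ?thesis unfolding T_def[abs_def] by simp
  qed
  have "P 1 \<le> liminf (\<lambda>n. P (T n))"
    using nn_integral_mult_exp_le_liminf[OF T_lim, of u M] unfolding P_def by simp
  also have "\<dots> \<le> liminf (\<lambda>n. N 1 + ennreal (8 * (1 - T n)) * C)"
  proof (intro Liminf_mono always_eventually allI)
    fix n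
    have "P (T n) \<le> N (T n)"
      unfolding P_def N_def
    proof (rule nn_integral_mult_exp_pos_le_neg_scaled)
      show "(\<integral>\<^sup>+ w. ennreal (exp (u w)) \<partial>M) \<le> (\<integral>\<^sup>+ w. ennreal (exp (T n * u w)) \<partial>M)"
        using optimal[of "T n"] T[of n] by simp
    qed (use T[of n] finite in \<open>auto intro: finite_measure_axioms\<close>)
    also have "\<dots> \<le> N 1 + ennreal (8 * (1 - T n)) * C"
      using nn_integral_neg_mult_exp_mult_le[of u M "T n"] T[of n] unfolding N_def C_def by simp
    finally show "P (T n) \<le> N 1 + ennreal (8 * (1 - T n)) * C" .
  qed
  also have "\<dots> = N 1"
  proof (rule lim_imp_Liminf)
    have "(\<lambda>n. ennreal (8 * (1 - T n))) \<longlonglongrightarrow> ennreal (8 * (1 - 1))"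
      by (intro tendsto_ennrealI tendsto_intros T_lim)
    then have "(\<lambda>n. C * ennreal (8 * (1 - T n))) \<longlonglongrightarrow> C * 0"
      by (intro ennreal_tendsto_cmult) (simp_all add: C_def less_top[symmetric])
    then show "(\<lambda>n. N 1 + ennreal (8 * (1 - T n)) * C) \<longlonglongrightarrow> N 1"
      using tendsto_add[OF tendsto_const, of _ "C * 0" sequentially "N 1"] by (simp add: mult.commute)
  qed simp
  finally show ?thesis
    unfolding P_def N_def by simp
qed

lemma nn_integral_exp_perturbation_less:
  fixes z g :: "'a \<Rightarrow> real"
  assumes z: "integrable M z" "\<And>w. 0 \<le> z w"
    and g: "g \<in> borel_measurable M" "\<And>w. \<bar>g w\<bar> \<le> 1" and pos: "0 < (\<integral>w. g w * z w \<partial>M)"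
  obtains s where "0 < s" and "(\<integral>\<^sup>+ w. ennreal (z w * exp (- (s * g w))) \<partial>M) < ennreal (\<integral>w. z w \<partial>M)"
proof -
  define Z c where "Z = (\<integral>w. z w \<partial>M)" and "c = (\<integral>w. g w * z w \<partial>M)"
  have gz_int: "integrable M (\<lambda>w. g w * z w)"
    using integrable_bounded_mult[OF g z(1)] .
  have "g w * z w \<le> z w" for w
    using mult_right_mono[OF _ z(2)[of w], of "g w" 1] g(2)[of w] by (simp add: abs_le_iff)
  then have "c \<le> Z"
    unfolding c_def Z_def using gz_int z by (intro integral_mono) auto
  with pos have "0 < Z" by (simp add: c_def)
  \<comment> \<open>By exp u \<le> 1 + u + u^2 the perturbed integral is at most Z - s c + s^2 Z, which is
    less than Z as soon as s Z < c.\<close>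
  define s where "s = min 1 (c / (2 * Z))"
  have s: "0 < s" "s \<le> 1" "s * Z \<le> c / 2"
    using pos \<open>0 < Z\<close> by (auto simp: s_def c_def min_def field_simps)
  note pointwise = mult_exp_neg_mult_le_quadratic[OF less_imp_le[OF s(1)] s(2) g(2) z(2)]
  have "(\<integral>\<^sup>+ w. ennreal (z w * exp (- (s * g w))) \<partial>M)
      \<le> (\<integral>\<^sup>+ w. ennreal ((1 + s\<^sup>2) * z w - s * (g w * z w)) \<partial>M)"
    by (intro nn_integral_mono ennreal_leI pointwise(1))
  also have "\<dots> = ennreal ((1 + s\<^sup>2) * Z - s * c)"
    using z(1) gz_int pointwise(2) by (simp add: nn_integral_eq_integral Z_def c_def)
  also have "\<dots> < ennreal Z"
  proof (rule ennreal_lessI)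
    show "0 < Z" by fact
    have "s * (s * Z) < s * c" using s pos by (simp add: c_def)
    then show "(1 + s\<^sup>2) * Z - s * c < Z" by (simp add: power2_eq_square algebra_simps)
  qed
  finally show ?thesis
    using that[OF s(1)] by (simp add: Z_def)
qed

section \<open>Integrals of extended-real functions\<close>

lemma eexp_simps [simp]: "eexp (ereal r) = ereal (exp r)" "eexp \<infinity> = \<infinity>" "eexp (- \<infinity>) = 0"
  by (simp_all add: eexp_def)

lemma eexp_nonneg: "0 \<le> eexp x"
  by (cases x) auto

lemma measurable_eexp [measurable]:
  assumes "f \<in> borel_measurable M" shows "(\<lambda>w. eexp (f w)) \<in> borel_measurable M"
proof (rule borel_measurable_ereal_cases[OF assms])
  have "(\<lambda>x. ereal (exp (real_of_ereal (f x)))) \<in> borel_measurable M" using assms by measurable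
  then show "(\<lambda>x. eexp (ereal (real_of_ereal (f x)))) \<in> borel_measurable M" by simp
qed

lemma eln_le_eln_imp_le:
  assumes "0 < a" "a < \<infinity>" "eln a \<le> eln b" shows "a \<le> b"
proof -
  obtain r where r: "0 < r" "a = ennreal r"
    using assms(1,2) by (cases a rule: ennreal_cases) (auto simp: ennreal_less_zero_iff)
  show ?thesis
  proof (cases b rule: ennreal_cases)
    case (real s)
    with assms(3) r have "0 < s" and "ln r \<le> ln s"
      by (auto simp: eln_def split: if_splits)
    with r real show ?thesis by (simp add: ennreal_leI)
  qed simp
qed

lemma e2ennreal_ereal_mult:
  assumes "0 \<le> t" shows "e2ennreal (ereal t * a) = ennreal t * e2ennreal a"
proof (cases a)
  case (real r)
  then show ?thesis
    using assms by (cases "0 \<le> r") (auto simp: ennreal_mult ennreal_neg mult_nonneg_nonpos)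
qed (use assms in \<open>cases "t = 0"; auto simp: ennreal_mult_top e2ennreal_neg\<close>)+

lemma e2ennreal_add_ereal_balance:
  "e2ennreal (f + ereal g) + e2ennreal (- f) + ennreal (- g) =
     e2ennreal (- (f + ereal g)) + e2ennreal f + ennreal g"
proof (cases f)
  case (real r)
  have "ennreal (r + g) + ennreal (- r) + ennreal (- g) = ennreal (- (r + g)) + ennreal r + ennreal g"
    by (cases "0 \<le> r"; cases "0 \<le> g"; cases "0 \<le> r + g") (simp_all add: ennreal_neg flip: ennreal_plus)
  then show ?thesis using real by simp
qed (simp_all add: e2ennreal_neg)

lemma e2ennreal_neg_add_ereal_le:
  "e2ennreal (- (f + ereal g)) \<le> e2ennreal (- f) + ennreal (- g)"
proof (cases f)
  case (real r)
  have "ennreal (- (r + g)) \<le> ennreal (- r) + ennreal (- g)"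
    by (cases "0 \<le> r"; cases "0 \<le> g") (simp_all add: ennreal_neg ennreal_leI flip: ennreal_plus)
  then show ?thesis using real by simp
qed (simp_all add: e2ennreal_neg)

definition eint_pos :: "'a measure \<Rightarrow> ('a \<Rightarrow> ereal) \<Rightarrow> ennreal" where
  "eint_pos M f = (\<integral>\<^sup>+ w. e2ennreal (f w) \<partial>M)"

definition eint_neg :: "'a measure \<Rightarrow> ('a \<Rightarrow> ereal) \<Rightarrow> ennreal" where
  "eint_neg M f = (\<integral>\<^sup>+ w. e2ennreal (- f w) \<partial>M)"

lemma eint_defined_nonneg_iff:
  assumes "f \<in> borel_measurable M"
  shows "eint_defined M f \<and> 0 \<le> eint M f \<longleftrightarrow> eint_neg M f < \<infinity> \<and> eint_neg M f \<le> eint_pos M f"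
proof -
  have "eint_defined M f \<longleftrightarrow> eint_pos M f < \<infinity> \<or> eint_neg M f < \<infinity>"
    and "eint M f = enn2ereal (eint_pos M f) - enn2ereal (eint_neg M f)"
    using assms unfolding eint_defined_def eint_def eint_pos_def eint_neg_def by simp_all
  then show ?thesis
    by (cases "eint_pos M f" rule: ennreal_cases; cases "eint_neg M f" rule: ennreal_cases)
      (auto simp: ennreal_le_iff)
qed

lemma eint_eq_0I:
  assumes "f \<in> borel_measurable M" "eint_neg M f < \<infinity>" "eint_pos M f = eint_neg M f"
  shows "eint_defined M f \<and> eint M f = 0"
  using assms by (cases "eint_neg M f" rule: ennreal_cases)
    (auto simp: eint_defined_def eint_def eint_pos_def eint_neg_def)

lemma eint_cong_AE:
  assumes "f \<in> borel_measurable M" "g \<in> borel_measurable M" "AE w in M. f w = g w"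
  shows "eint_defined M f \<longleftrightarrow> eint_defined M g" and "eint M f = eint M g"
proof -
  have "(\<integral>\<^sup>+ w. e2ennreal (f w) \<partial>M) = (\<integral>\<^sup>+ w. e2ennreal (g w) \<partial>M)"
    and "(\<integral>\<^sup>+ w. e2ennreal (- f w) \<partial>M) = (\<integral>\<^sup>+ w. e2ennreal (- g w) \<partial>M)"
    using assms(3) by (auto intro!: nn_integral_cong_AE)
  then show "eint_defined M f \<longleftrightarrow> eint_defined M g" and "eint M f = eint M g"
    using assms(1,2) unfolding eint_defined_def eint_def by simp_all
qed

lemma eint_AE_zero:
  assumes "f \<in> borel_measurable M" "AE w in M. f w = 0"
  shows "eint_defined M f \<and> eint M f = 0"
  using eint_cong_AE[OF assms(1) _ assms(2)] by (simp add: eint_defined_def eint_def)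

lemma eint_nonneg_scale:
  assumes [measurable]: "f \<in> borel_measurable M" and "eint_defined M f" "0 \<le> eint M f" "0 \<le> t"
  shows "eint_defined M (\<lambda>w. ereal t * f w) \<and> 0 \<le> eint M (\<lambda>w. ereal t * f w)"
proof -
  have "e2ennreal (ereal t * f w) = ennreal t * e2ennreal (f w)"
    and "e2ennreal (- (ereal t * f w)) = ennreal t * e2ennreal (- f w)" for w
    using e2ennreal_ereal_mult[OF assms(4), of "f w"] e2ennreal_ereal_mult[OF assms(4), of "- f w"]
    by simp_all
  then have "eint_pos M (\<lambda>w. ereal t * f w) = ennreal t * eint_pos M f"
    and "eint_neg M (\<lambda>w. ereal t * f w) = ennreal t * eint_neg M f"
    by (simp_all add: eint_pos_def eint_neg_def nn_integral_cmult)
  then show ?thesis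
    using assms eint_defined_nonneg_iff[of f M] eint_defined_nonneg_iff[of "\<lambda>w. ereal t * f w" M]
    by (auto simp: ennreal_mult_less_top intro: mult_left_mono)
qed

lemma eint_add_ereal_balance:
  assumes [measurable]: "f \<in> borel_measurable M" "g \<in> borel_measurable M"
  shows "eint_pos M (\<lambda>w. f w + ereal (g w)) + eint_neg M f + (\<integral>\<^sup>+ w. ennreal (- g w) \<partial>M) =
    eint_neg M (\<lambda>w. f w + ereal (g w)) + eint_pos M f + (\<integral>\<^sup>+ w. ennreal (g w) \<partial>M)"
proof -
  have "eint_pos M (\<lambda>w. f w + ereal (g w)) + eint_neg M f + (\<integral>\<^sup>+ w. ennreal (- g w) \<partial>M) =
      (\<integral>\<^sup>+ w. e2ennreal (f w + ereal (g w)) + e2ennreal (- f w) + ennreal (- g w) \<partial>M)"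
    by (simp add: eint_pos_def eint_neg_def nn_integral_add)
  also have "\<dots> = (\<integral>\<^sup>+ w. e2ennreal (- (f w + ereal (g w))) + e2ennreal (f w) + ennreal (g w) \<partial>M)"
    by (rule nn_integral_cong) (rule e2ennreal_add_ereal_balance)
  also have "\<dots> = eint_neg M (\<lambda>w. f w + ereal (g w)) + eint_pos M f + (\<integral>\<^sup>+ w. ennreal (g w) \<partial>M)"
    by (simp add: eint_pos_def eint_neg_def nn_integral_add)
  finally show ?thesis .
qed

lemma eint_neg_add_ereal_le:
  assumes [measurable]: "f \<in> borel_measurable M" "g \<in> borel_measurable M"
  shows "eint_neg M (\<lambda>w. f w + ereal (g w)) \<le> eint_neg M f + (\<integral>\<^sup>+ w. ennreal (- g w) \<partial>M)"
proof -
  have "eint_neg M (\<lambda>w. f w + ereal (g w)) \<le> (\<integral>\<^sup>+ w. e2ennreal (- f w) + ennreal (- g w) \<partial>M)"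
    unfolding eint_neg_def by (rule nn_integral_mono) (rule e2ennreal_neg_add_ereal_le)
  also have "\<dots> = eint_neg M f + (\<integral>\<^sup>+ w. ennreal (- g w) \<partial>M)"
    by (simp add: eint_neg_def nn_integral_add)
  finally show ?thesis .
qed

lemma eint_nonneg_add_integrable:
  assumes f[measurable]: "f \<in> borel_measurable M" and "eint_defined M f" "0 \<le> eint M f"
    and g: "integrable M g" "0 \<le> integral\<^sup>L M g"
  shows "eint_defined M (\<lambda>w. f w + ereal (g w)) \<and> 0 \<le> eint M (\<lambda>w. f w + ereal (g w))"
proof -
  have g_meas[measurable]: "g \<in> borel_measurable M" using g(1) by blast
  let ?h = "\<lambda>w. f w + ereal (g w)"
  define gp gn where "gp = (\<integral>\<^sup>+ w. ennreal (g w) \<partial>M)" and "gn = (\<integral>\<^sup>+ w. ennreal (- g w) \<partial>M)"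
  have f_fin: "eint_neg M f < \<infinity>" and f_le: "eint_neg M f \<le> eint_pos M f"
    using eint_defined_nonneg_iff[OF f] assms(2,3) by auto
  have g_fin: "gp < \<infinity>" "gn < \<infinity>"
    using integrableD[OF g(1)] by (auto simp: gp_def gn_def less_top)
  have g_le: "gn \<le> gp"
    using g(2) g_fin real_lebesgue_integral_def[OF g(1)] unfolding gp_def[symmetric] gn_def[symmetric]
    by (cases gp rule: ennreal_cases; cases gn rule: ennreal_cases) (auto simp: ennreal_le_iff)
  have "(eint_neg M f + gn) + eint_neg M ?h \<le> eint_neg M ?h + eint_pos M f + gp"
    using f_le g_le by (simp add: add_mono add.commute add.left_commute)
  also have "\<dots> = (eint_neg M f + gn) + eint_pos M ?h"
    using eint_add_ereal_balance[OF f g_meas] by (simp add: gp_def gn_def ac_simps)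
  finally have "eint_neg M ?h \<le> eint_pos M ?h"
    using f_fin g_fin by (auto simp: ennreal_add_left_cancel_le)
  moreover have "eint_neg M ?h < \<infinity>"
    using eint_neg_add_ereal_le[OF f g_meas] f_fin g_fin
    by (simp add: gn_def le_less_trans)
  ultimately show ?thesis
    using eint_defined_nonneg_iff[of ?h M] by simp
qed

section \<open>The dual cone and the optimal point\<close>

lemma dual_cone_measurable: "y \<in> dual_cone M K \<Longrightarrow> y \<in> borel_measurable M"
  by (simp add: dual_cone_def)

lemma zero_in_dual_cone: "(\<lambda>w. 0) \<in> dual_cone M K"
  using eint_AE_zero[of "\<lambda>w. 0" M] by (simp add: dual_cone_def)

lemma dual_cone_scale:
  assumes K: "K \<subseteq> {x. integrable M x}" and y: "y \<in> dual_cone M K" and "0 \<le> t"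
  shows "(\<lambda>w. ereal t * y w) \<in> dual_cone M K"
proof -
  have [measurable]: "y \<in> borel_measurable M" using y by (rule dual_cone_measurable)
  have "eint_defined M (\<lambda>w. ereal (x w) * (ereal t * y w)) \<and> 0 \<le> eint M (\<lambda>w. ereal (x w) * (ereal t * y w))"
    if "x \<in> K" for x
  proof -
    have [measurable]: "x \<in> borel_measurable M" using K that by auto
    have "eint_defined M (\<lambda>w. ereal t * (ereal (x w) * y w))
        \<and> 0 \<le> eint M (\<lambda>w. ereal t * (ereal (x w) * y w))"
      using y that \<open>0 \<le> t\<close> by (intro eint_nonneg_scale) (auto simp: dual_cone_def)
    then show ?thesis by (simp add: ac_simps)
  qed
  then show ?thesis by (simp add: dual_cone_def)
qed

lemma dual_cone_add_bounded:
  assumes K: "K \<subseteq> {x. integrable M x}" and y: "y \<in> dual_cone M K"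
    and h: "h \<in> borel_measurable M" "\<And>w. \<bar>h w\<bar> \<le> B" and h_dual: "\<And>x. x \<in> K \<Longrightarrow> 0 \<le> (\<integral>w. h w * x w \<partial>M)"
  shows "(\<lambda>w. y w + ereal (h w)) \<in> dual_cone M K"
proof -
  have [measurable]: "y \<in> borel_measurable M" "h \<in> borel_measurable M"
    using y h by (auto intro: dual_cone_measurable)
  have "eint_defined M (\<lambda>w. ereal (x w) * (y w + ereal (h w)))
      \<and> 0 \<le> eint M (\<lambda>w. ereal (x w) * (y w + ereal (h w)))"
    if "x \<in> K" for x
  proof -
    have x: "integrable M x" using K that by auto
    then have [measurable]: "x \<in> borel_measurable M" by auto
    have "eint_defined M (\<lambda>w. ereal (x w) * y w + ereal (h w * x w))
        \<and> 0 \<le> eint M (\<lambda>w. ereal (x w) * y w + ereal (h w * x w))"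
      using y that integrable_bounded_mult[OF h x] h_dual[OF that]
      by (intro eint_nonneg_add_integrable) (auto simp: dual_cone_def)
    moreover have "ereal (x w) * (y w + ereal (h w)) = ereal (x w) * y w + ereal (h w * x w)" for w
      by (cases "y w") (auto simp: algebra_simps)
    ultimately show ?thesis by simp
  qed
  then show ?thesis by (simp add: dual_cone_def)
qed

locale exp_dual_optimum = prob_space Q for Q :: "'a measure" +
  fixes K :: "('a \<Rightarrow> real) set" and y0 :: "'a \<Rightarrow> ereal"
  assumes K_integrable: "K \<subseteq> {x. integrable Q x}"
    and K_closed: "L1_closed Q K"
    and K_cone: "convex_cone_fun K"
    and y0_dual: "y0 \<in> dual_cone Q K"
    and y0_optimal: "\<forall>y\<in>dual_cone Q K. objective Q y0 \<le> objective Q y"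
begin

lemma y0_measurable [measurable]: "y0 \<in> borel_measurable Q"
  using y0_dual by (rule dual_cone_measurable)

lemma nn_integral_exp_y0_finite: "(\<integral>\<^sup>+ w. e2ennreal (eexp (y0 w)) \<partial>Q) < \<infinity>"
proof -
  have "eexp 0 = 1"
    by (simp add: eexp_def zero_ereal_def one_ereal_def)
  then have "objective Q (\<lambda>w. 0) = 0"
    by (simp add: objective_def eln_def emeasure_space_1 one_ereal_def)
  then have "eln (\<integral>\<^sup>+ w. e2ennreal (eexp (y0 w)) \<partial>Q) \<le> 0"
    using y0_optimal zero_in_dual_cone by (force simp: objective_def)
  then show ?thesis
    by (auto simp: eln_def less_top split: if_splits)
qed

lemma nn_integral_exp_y0_le:
  assumes "(\<integral>\<^sup>+ w. e2ennreal (eexp (y0 w)) \<partial>Q) \<noteq> 0" and "y \<in> dual_cone Q K"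
  shows "(\<integral>\<^sup>+ w. e2ennreal (eexp (y0 w)) \<partial>Q) \<le> (\<integral>\<^sup>+ w. e2ennreal (eexp (y w)) \<partial>Q)"
  using assms nn_integral_exp_y0_finite y0_optimal
  by (intro eln_le_eln_imp_le) (auto simp: objective_def zero_less_iff_neq_zero)

lemma y0_not_PInf: "AE w in Q. y0 w \<noteq> \<infinity>"
proof -
  have "AE w in Q. e2ennreal (eexp (y0 w)) \<noteq> \<infinity>"
    using nn_integral_exp_y0_finite by (intro nn_integral_PInf_AE) auto
  then show ?thesis by eventually_elim auto
qed

definition exp_y0 :: "'a \<Rightarrow> real" where
  "exp_y0 w = real_of_ereal (eexp (y0 w))"

lemma exp_y0_measurable [measurable]: "exp_y0 \<in> borel_measurable Q"
  unfolding exp_y0_def by measurable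

lemma exp_y0_nonneg: "0 \<le> exp_y0 w"
  using eexp_nonneg[of "y0 w"] by (simp add: exp_y0_def real_of_ereal_pos)

lemma eexp_y0_AE: "AE w in Q. eexp (y0 w) = ereal (exp_y0 w)"
  using y0_not_PInf by eventually_elim (auto simp: exp_y0_def eexp_def split: ereal.splits)

lemma nn_integral_exp_y0: "(\<integral>\<^sup>+ w. e2ennreal (eexp (y0 w)) \<partial>Q) = (\<integral>\<^sup>+ w. ennreal (exp_y0 w) \<partial>Q)"
  using eexp_y0_AE by (intro nn_integral_cong_AE) (auto elim: eventually_mono)

lemma integrable_exp_y0: "integrable Q exp_y0"
  using nn_integral_exp_y0_finite exp_y0_nonneg
  by (intro integrableI_nonneg) (auto simp: nn_integral_exp_y0)

lemma K_nonempty: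
  assumes "(\<integral>\<^sup>+ w. e2ennreal (eexp (y0 w)) \<partial>Q) \<noteq> 0"
  shows "K \<noteq> {}"
proof
  assume "K = {}"
  then have "objective Q y0 \<le> objective Q (\<lambda>w. - \<infinity>)"
    using y0_optimal by (simp add: dual_cone_def)
  then show False
    using assms by (simp add: objective_def eln_def split: if_splits)
qed

lemma exp_y0_in_K:
  assumes "(\<integral>\<^sup>+ w. e2ennreal (eexp (y0 w)) \<partial>Q) \<noteq> 0"
  shows "exp_y0 \<in> K"
proof (rule ccontr)
  assume "exp_y0 \<notin> K"
  have "finite_measure Q" by (rule finite_measureI) simp
  then obtain g where g: "g \<in> borel_measurable Q" "\<And>w. \<bar>g w\<bar> \<le> 1"
    and g_K: "\<And>x. x \<in> K \<Longrightarrow> (\<integral>w. g w * x w \<partial>Q) \<le> 0" and g_exp_y0: "0 < (\<integral>w. g w * exp_y0 w \<partial>Q)"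
    using L1_closed_cone_separation[OF _ K_integrable K_closed K_cone
        K_nonempty[OF assms] integrable_exp_y0 \<open>exp_y0 \<notin> K\<close>] by blast
  obtain s where "0 < s"
    and decrease: "(\<integral>\<^sup>+ w. ennreal (exp_y0 w * exp (- (s * g w))) \<partial>Q) < ennreal (\<integral>w. exp_y0 w \<partial>Q)"
    using nn_integral_exp_perturbation_less[OF integrable_exp_y0 exp_y0_nonneg g g_exp_y0] by blast
  have "(\<lambda>w. y0 w + ereal (- (s * g w))) \<in> dual_cone Q K"
  proof (rule dual_cone_add_bounded[OF K_integrable y0_dual])
    show "\<bar>- (s * g w)\<bar> \<le> s" for w
      using \<open>0 < s\<close> g(2)[of w] by (simp add: abs_mult mult_left_le)
    show "0 \<le> (\<integral>w. - (s * g w) * x w \<partial>Q)" if "x \<in> K" for x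
      using g_K[OF that] \<open>0 < s\<close> by (simp add: mult.assoc mult_nonneg_nonpos)
  qed (use g in simp)
  then have "(\<integral>\<^sup>+ w. e2ennreal (eexp (y0 w)) \<partial>Q)
      \<le> (\<integral>\<^sup>+ w. e2ennreal (eexp (y0 w + ereal (- (s * g w)))) \<partial>Q)"
    by (rule nn_integral_exp_y0_le[OF assms])
  also have "\<dots> = (\<integral>\<^sup>+ w. ennreal (exp_y0 w * exp (- (s * g w))) \<partial>Q)"
    using eexp_y0_AE
    by (intro nn_integral_cong_AE) (auto elim!: eventually_mono simp: exp_y0_def eexp_def mult_exp_exp
        split: ereal.splits)
  also have "\<dots> < ennreal (\<integral>w. exp_y0 w \<partial>Q)"
    by (fact decrease)
  also have "\<dots> = (\<integral>\<^sup>+ w. e2ennreal (eexp (y0 w)) \<partial>Q)"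
    using integrable_exp_y0 exp_y0_nonneg by (simp add: nn_integral_exp_y0 nn_integral_eq_integral)
  finally show False by simp
qed

lemma eint_mult_exp_y0_eq_0_if_null:
  assumes "(\<integral>\<^sup>+ w. e2ennreal (eexp (y0 w)) \<partial>Q) = 0" and [measurable]: "y \<in> borel_measurable Q"
  shows "eint_defined Q (\<lambda>w. y w * eexp (y0 w)) \<and> eint Q (\<lambda>w. y w * eexp (y0 w)) = 0"
proof -
  have "(\<lambda>w. e2ennreal (eexp (y0 w))) \<in> borel_measurable Q"
    by measurable
  with assms(1) have "AE w in Q. e2ennreal (eexp (y0 w)) = 0"
    by (simp add: nn_integral_0_iff_AE)
  then have "AE w in Q. eexp (y0 w) = 0"
    by (rule eventually_mono) (simp add: eexp_def split: ereal.splits)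
  then show ?thesis
    by (intro eint_AE_zero) (auto elim!: eventually_mono)
qed

lemma dual_cone_pairing_exp_y0_nonneg:
  assumes "(\<integral>\<^sup>+ w. e2ennreal (eexp (y0 w)) \<partial>Q) \<noteq> 0" and y: "y \<in> dual_cone Q K"
  shows "eint_defined Q (\<lambda>w. y w * eexp (y0 w)) \<and> 0 \<le> eint Q (\<lambda>w. y w * eexp (y0 w))"
proof -
  have [measurable]: "y \<in> borel_measurable Q" using y by (rule dual_cone_measurable)
  have "AE w in Q. y w * eexp (y0 w) = ereal (exp_y0 w) * y w"
    using eexp_y0_AE by eventually_elim (simp add: mult.commute)
  then have "eint_defined Q (\<lambda>w. y w * eexp (y0 w)) = eint_defined Q (\<lambda>w. ereal (exp_y0 w) * y w)"
    and "eint Q (\<lambda>w. y w * eexp (y0 w)) = eint Q (\<lambda>w. ereal (exp_y0 w) * y w)"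
    by (simp_all add: eint_cong_AE)
  with y exp_y0_in_K[OF assms(1)] show ?thesis
    by (simp add: dual_cone_def)
qed

lemma nn_integral_exp_real_of_ereal_y0:
  assumes "0 < t"
  shows "(\<integral>\<^sup>+ w. ennreal (exp (t * real_of_ereal (y0 w))) \<partial>Q) =
    (\<integral>\<^sup>+ w. e2ennreal (eexp (ereal t * y0 w)) \<partial>Q) + emeasure Q {w \<in> space Q. y0 w = - \<infinity>}"
proof -
  have "AE w in Q. ennreal (exp (t * real_of_ereal (y0 w))) =
      e2ennreal (eexp (ereal t * y0 w)) + indicator {w \<in> space Q. y0 w = - \<infinity>} w"
    using y0_not_PInf AE_space
  proof eventually_elim
    fix w assume "y0 w \<noteq> \<infinity>" "w \<in> space Q"
    with assms show "ennreal (exp (t * real_of_ereal (y0 w))) =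
        e2ennreal (eexp (ereal t * y0 w)) + indicator {w \<in> space Q. y0 w = - \<infinity>} w"
      by (cases "y0 w") simp_all
  qed
  then show ?thesis
    by (simp add: nn_integral_cong_AE nn_integral_add)
qed

lemma eint_pos_le_eint_neg_y0:
  assumes "(\<integral>\<^sup>+ w. e2ennreal (eexp (y0 w)) \<partial>Q) \<noteq> 0"
  shows "eint_pos Q (\<lambda>w. y0 w * eexp (y0 w)) \<le> eint_neg Q (\<lambda>w. y0 w * eexp (y0 w))"
proof -
  \<comment> \<open>Pass to the real function u, which is 0 where y0 = -\<infinity>; this adds the same finite
    constant N to every exponential integral.\<close>
  define u where "u w = real_of_ereal (y0 w)" for w
  define N where "N = emeasure Q {w \<in> space Q. y0 w = - \<infinity>}"
  have [measurable]: "u \<in> borel_measurable Q" unfolding u_def by measurable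
  have shift: "(\<integral>\<^sup>+ w. ennreal (exp (t * u w)) \<partial>Q) = (\<integral>\<^sup>+ w. e2ennreal (eexp (ereal t * y0 w)) \<partial>Q) + N"
    if "0 < t" for t
    unfolding u_def N_def using that by (rule nn_integral_exp_real_of_ereal_y0)
  have "N < \<infinity>"
    unfolding N_def by (simp add: less_top[symmetric])
  have "(\<integral>\<^sup>+ w. ennreal (u w * exp (u w)) \<partial>Q) \<le> (\<integral>\<^sup>+ w. ennreal (- (u w * exp (u w))) \<partial>Q)"
  proof (rule nn_integral_mult_exp_pos_le_neg)
    show "finite_measure Q" by (rule finite_measureI) simp
    show "(\<integral>\<^sup>+ w. ennreal (exp (u w)) \<partial>Q) < \<infinity>"
      using shift[of 1] nn_integral_exp_y0_finite \<open>N < \<infinity>\<close> by simp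
    show "(\<integral>\<^sup>+ w. ennreal (exp (u w)) \<partial>Q) \<le> (\<integral>\<^sup>+ w. ennreal (exp (t * u w)) \<partial>Q)" if "0 < t" "t < 1" for t
      using shift[of 1] shift[of t] that
        nn_integral_exp_y0_le[OF assms dual_cone_scale[OF K_integrable y0_dual, of t]]
      by (simp add: add_right_mono)
  qed simp
  moreover have "eint_pos Q (\<lambda>w. y0 w * eexp (y0 w)) = (\<integral>\<^sup>+ w. ennreal (u w * exp (u w)) \<partial>Q)"
    and "eint_neg Q (\<lambda>w. y0 w * eexp (y0 w)) = (\<integral>\<^sup>+ w. ennreal (- (u w * exp (u w))) \<partial>Q)"
  proof -
    have "e2ennreal (y0 w * eexp (y0 w)) = ennreal (u w * exp (u w))
        \<and> e2ennreal (- (y0 w * eexp (y0 w))) = ennreal (- (u w * exp (u w)))" if "y0 w \<noteq> \<infinity>" for w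
      using that by (cases "y0 w") (simp_all add: u_def)
    then show "eint_pos Q (\<lambda>w. y0 w * eexp (y0 w)) = (\<integral>\<^sup>+ w. ennreal (u w * exp (u w)) \<partial>Q)"
      and "eint_neg Q (\<lambda>w. y0 w * eexp (y0 w)) = (\<integral>\<^sup>+ w. ennreal (- (u w * exp (u w))) \<partial>Q)"
      unfolding eint_pos_def eint_neg_def using y0_not_PInf
      by (auto intro!: nn_integral_cong_AE elim!: eventually_mono)
  qed
  ultimately show ?thesis by simp
qed

end

theorem lemma3p2:
  fixes Q :: "'a measure" and K :: "('a \<Rightarrow> real) set" and y0 :: "'a \<Rightarrow> ereal"
  assumes "prob_space Q"
    and "K \<subseteq> {x. integrable Q x}"
    and "L1_closed Q K"
    and "convex_cone_fun K"
    and "y0 \<in> dual_cone Q K"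
    and "\<forall>y\<in>dual_cone Q K. objective Q y0 \<le> objective Q y"
  shows "eint_defined Q (\<lambda>w. y0 w * eexp (y0 w)) \<and> eint Q (\<lambda>w. y0 w * eexp (y0 w)) = 0 \<and>
         (\<forall>y\<in>dual_cone Q K. eint_defined Q (\<lambda>w. y w * eexp (y0 w)) \<and>
           eint Q (\<lambda>w. y w * eexp (y0 w)) \<ge> 0)"
proof -
  interpret exp_dual_optimum Q K y0
    using assms by (simp add: exp_dual_optimum_def exp_dual_optimum_axioms_def)
  show ?thesis
  proof (cases "(\<integral>\<^sup>+ w. e2ennreal (eexp (y0 w)) \<partial>Q) = 0")
    case True
    then show ?thesis
      using eint_mult_exp_y0_eq_0_if_null dual_cone_measurable by auto
  next
    case False
    let ?f = "\<lambda>w. y0 w * eexp (y0 w)"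
    have "eint_neg Q ?f < \<infinity>" and "eint_neg Q ?f \<le> eint_pos Q ?f"
      using dual_cone_pairing_exp_y0_nonneg[OF False y0_dual] eint_defined_nonneg_iff[of ?f Q] by auto
    with eint_pos_le_eint_neg_y0[OF False] have "eint_defined Q ?f \<and> eint Q ?f = 0"
      by (intro eint_eq_0I) auto
    with dual_cone_pairing_exp_y0_nonneg[OF False] show ?thesis
      by auto
  qed
qed

end
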